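(* Consider the finite-horizon setting below with horizon $T$, transitions $P$, and agent rewards $\rho$, with $p_{\mathrm{maj}},p_{\mathrm{min}}>0$. Let $R_{\max}>0$ with $|R_{s,a}|\le R_{\max}$ and $|\rho_{s,a}|\le R_{\max}$ for all $s,a$. Let $\pi_0$ be a policy with $\Lambda^{(\pi_0)}_{s,a}\ge\lambda_0$ for all $s\in S,a\in A$, for some $\lambda_0>0$. Let $\epsilon,\delta>0$ and let $N_0\ge\dfrac{128\,T^2|S|^2R_{\max}^2\log(2|S|^2|A|/\delta)}{\lambda_0^2\epsilon^2}$. Run $N_0$ independent episodes of $\pi_0$ and form the empirical transition estimate $\hat P$ as described below; let $\hat M$ denote the model with $P$ replaced by $\hat P$. Assume $\Pi_{\mathrm{DP},\epsilon/4}\ne\varnothing$ and let $\pi^*$ be a maximizer of $R^{(\pi)}$ over $\Pi_{\mathrm{DP},\epsilon/4}$ (computed in the true model). Then with probability at least $1-\delta$ over the episodes, the set $\hat\Pi_{\mathrm{DP},\epsilon/2}$ (computed in $\hat M$) is nonempty, and every maximizer $\hat\pi$ of $\hat R^{(\pi)}$ over $\hat\Pi_{\mathrm{DP},\epsilon/2}$ satisfies $\hat\pi\in\Pi_{\mathrm{DP},\epsilon}$ and $R^{(\pi^* )}-R^{(\hat\pi)}\le\epsilon$, where $R^{(\cdot)}$ and $\Pi_{\mathrm{DP},\epsilon}$ refer to the true model.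
   Context: Finite-horizon setting: $S,A$ finite nonempty sets, $D$ a probability distribution on $S$, transition kernel $P$ ($P_{s,a,s'}\ge0$, $\sum_{s'}P_{s,a,s'}=1$), rewards $R\in\mathbb{R}^{S\times A}$, horizon $T\in\mathbb{N}_{\ge1}$. A policy is $\pi\in\mathbb{R}^{S\times A}$ with $\pi_{s,a}\ge0$, $\sum_a\pi_{s,a}=1$. Let $P^{(\pi)}_{s,s'}=\sum_a\pi_{s,a}P_{s,a,s'}$; for a distribution $\mu$, $\mu^{(\pi,0)}=\mu$, $\mu^{(\pi,t)}_{s'}=\sum_s\mu^{(\pi,t-1)}_sP^{(\pi)}_{s,s'}$, and $\bar\mu^{(\pi)}=\frac1T\sum_{t=0}^{T-1}\mu^{(\pi,t)}$. Let $\Lambda^{(\pi)}_{s,a}=\bar D^{(\pi)}_s\pi_{s,a}$ and $R^{(\pi)}=\sum_{s,a}\Lambda^{(\pi)}_{s,a}R_{s,a}$. Fairness: $S=Z\times\tilde S$, $Z=\{\mathrm{maj},\mathrm{min}\}$, agent rewards $\rho\in\mathbb{R}^{S\times A}$; $p_z=\sum_{\tilde s}D_{(z,\tilde s)}$, $(D_z)_s=D_s\mathbb{I}[s=(z,\tilde s)\text{ for some }\tilde s]/p_z$; $\rho_z^{(\pi)}=\sum_{s,a}(\bar D_z^{(\pi)})_s\pi_{s,a}\rho_{s,a}$ where $\bar D_z^{(\pi)}$ is $\bar\mu^{(\pi)}$ for $\mu=D_z$; $\Pi_{\mathrm{DP},\eta}=\{\pi:|\rho_{\mathrm{maj}}^{(\pi)}-\rho_{\mathrm{min}}^{(\pi)}|\le\eta\}$.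 The same quantities with $P$ replaced by $\hat P$ are denoted $\hat R^{(\pi)},\hat\rho_z^{(\pi)},\hat\Pi_{\mathrm{DP},\eta}$. An episode of $\pi_0$ is a random trajectory $s_0\sim D$, $a_t\sim(\pi_0)_{s_t,\cdot}$, $s_{t+1}\sim P_{s_t,a_t,\cdot}$ for $t=0,\dots,T-1$, producing the observed tuples $(s_t,a_t,s_{t+1})$; episodes are independent. $\hat P_{s,a,s'}$ is the number of observed tuples $(s,a,s')$ divided by the number of observed tuples of the form $(s,a,\cdot)$ (an arbitrary distribution if the latter is $0$). *)

theory Defs
  imports Complex_Main
begin

definition is_distr :: "('st::finite \<Rightarrow> real) \<Rightarrow> bool" where
  "is_distr \<mu> \<longleftrightarrow> (\<forall>s. \<mu> s \<ge> 0) \<and> (\<Sum>s\<in>UNIV. \<mu> s) = 1"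

definition is_kernel :: "('st::finite \<Rightarrow> 'a::finite \<Rightarrow> 'st \<Rightarrow> real) \<Rightarrow> bool" where
  "is_kernel P \<longleftrightarrow> (\<forall>s a s'. P s a s' \<ge> 0) \<and> (\<forall>s a. (\<Sum>s'\<in>UNIV. P s a s') = 1)"

definition is_policy :: "('st::finite \<Rightarrow> 'a::finite \<Rightarrow> real) \<Rightarrow> bool" where
  "is_policy \<pi> \<longleftrightarrow> (\<forall>s a. \<pi> s a \<ge> 0) \<and> (\<forall>s. (\<Sum>a\<in>UNIV. \<pi> s a) = 1)"

definition Ppi :: "('st::finite \<Rightarrow> 'a::finite \<Rightarrow> 'st \<Rightarrow> real) \<Rightarrow> ('st \<Rightarrow> 'a \<Rightarrow> real) \<Rightarrow> 'st \<Rightarrow> 'st \<Rightarrow> real" where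
  "Ppi P \<pi> s s' = (\<Sum>a\<in>UNIV. \<pi> s a * P s a s')"

fun mu_t :: "('st::finite \<Rightarrow> 'a::finite \<Rightarrow> 'st \<Rightarrow> real) \<Rightarrow> ('st \<Rightarrow> 'a \<Rightarrow> real) \<Rightarrow> ('st \<Rightarrow> real) \<Rightarrow> nat \<Rightarrow> 'st \<Rightarrow> real" where
  "mu_t P \<pi> \<mu> 0 = \<mu>"
| "mu_t P \<pi> \<mu> (Suc t) = (\<lambda>s'. \<Sum>s\<in>UNIV. mu_t P \<pi> \<mu> t s * Ppi P \<pi> s s')"

definition mu_bar :: "nat \<Rightarrow> ('st::finite \<Rightarrow> 'a::finite \<Rightarrow> 'st \<Rightarrow> real) \<Rightarrow> ('st \<Rightarrow> 'a \<Rightarrow> real) \<Rightarrow> ('st \<Rightarrow> real) \<Rightarrow> 'st \<Rightarrow> real" where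
  "mu_bar T P \<pi> \<mu> s = (1 / real T) * (\<Sum>t<T. mu_t P \<pi> \<mu> t s)"

definition Lam :: "nat \<Rightarrow> ('st::finite \<Rightarrow> 'a::finite \<Rightarrow> 'st \<Rightarrow> real) \<Rightarrow> ('st \<Rightarrow> real) \<Rightarrow> ('st \<Rightarrow> 'a \<Rightarrow> real) \<Rightarrow> 'st \<Rightarrow> 'a \<Rightarrow> real" where
  "Lam T P D \<pi> s a = mu_bar T P \<pi> D s * \<pi> s a"

definition Rval :: "nat \<Rightarrow> ('st::finite \<Rightarrow> 'a::finite \<Rightarrow> 'st \<Rightarrow> real) \<Rightarrow> ('st \<Rightarrow> real) \<Rightarrow> ('st \<Rightarrow> 'a \<Rightarrow> real) \<Rightarrow> ('st \<Rightarrow> 'a \<Rightarrow> real) \<Rightarrow> real" where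
  "Rval T P D R \<pi> = (\<Sum>s\<in>UNIV. \<Sum>a\<in>UNIV. Lam T P D \<pi> s a * R s a)"

datatype grp = Maj | Min

lemma UNIV_grp: "(UNIV :: grp set) = {Maj, Min}"
  using grp.exhaust by auto

instance grp :: finite
  by standard (simp add: UNIV_grp)

definition p_grp :: "(grp \<times> 's::finite \<Rightarrow> real) \<Rightarrow> grp \<Rightarrow> real" where
  "p_grp D z = (\<Sum>s\<in>UNIV. D (z, s))"

definition D_grp :: "(grp \<times> 's::finite \<Rightarrow> real) \<Rightarrow> grp \<Rightarrow> grp \<times> 's \<Rightarrow> real" where
  "D_grp D z x = (if fst x = z then D x / p_grp D z else 0)"

definition rho_grp :: "nat \<Rightarrow> (grp \<times> 's::finite \<Rightarrow> 'a::finite \<Rightarrow> grp \<times> 's \<Rightarrow> real) \<Rightarrow> (grp \<times> 's \<Rightarrow> real)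
    \<Rightarrow> (grp \<times> 's \<Rightarrow> 'a \<Rightarrow> real) \<Rightarrow> (grp \<times> 's \<Rightarrow> 'a \<Rightarrow> real) \<Rightarrow> grp \<Rightarrow> real" where
  "rho_grp T P D \<rho> \<pi> z = (\<Sum>s\<in>UNIV. \<Sum>a\<in>UNIV. mu_bar T P \<pi> (D_grp D z) s * \<pi> s a * \<rho> s a)"

definition PiDP :: "nat \<Rightarrow> (grp \<times> 's::finite \<Rightarrow> 'a::finite \<Rightarrow> grp \<times> 's \<Rightarrow> real) \<Rightarrow> (grp \<times> 's \<Rightarrow> real)
    \<Rightarrow> (grp \<times> 's \<Rightarrow> 'a \<Rightarrow> real) \<Rightarrow> real \<Rightarrow> (grp \<times> 's \<Rightarrow> 'a \<Rightarrow> real) set" where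
  "PiDP T P D \<rho> \<eta> = {\<pi>. is_policy \<pi> \<and> \<bar>rho_grp T P D \<rho> \<pi> Maj - rho_grp T P D \<rho> \<pi> Min\<bar> \<le> \<eta>}"

text \<open>An episode is the list of its T observed tuples (s_t, a_t, s_{t+1}), t = 0..T-1.\<close>
definition valid_traj :: "nat \<Rightarrow> ('st \<times> 'a \<times> 'st) list \<Rightarrow> bool" where
  "valid_traj T tr \<longleftrightarrow> length tr = T \<and>
     (\<forall>i. Suc i < T \<longrightarrow> snd (snd (tr ! i)) = fst (tr ! Suc i))"

definition traj_prob :: "('st \<Rightarrow> real) \<Rightarrow> ('st \<Rightarrow> 'a \<Rightarrow> 'st \<Rightarrow> real) \<Rightarrow> ('st \<Rightarrow> 'a \<Rightarrow> real)
    \<Rightarrow> ('st \<times> 'a \<times> 'st) list \<Rightarrow> real" where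
  "traj_prob D P \<pi>0 tr = D (fst (hd tr)) *
     (\<Prod>i<length tr. (case tr ! i of (s, a, s') \<Rightarrow> \<pi>0 s a * P s a s'))"

definition datasets :: "nat \<Rightarrow> nat \<Rightarrow> ('st \<times> 'a \<times> 'st) list list set" where
  "datasets T N = {ds. length ds = N \<and> (\<forall>tr\<in>set ds. valid_traj T tr)}"

definition data_prob :: "nat \<Rightarrow> nat \<Rightarrow> ('st \<Rightarrow> real) \<Rightarrow> ('st \<Rightarrow> 'a \<Rightarrow> 'st \<Rightarrow> real) \<Rightarrow> ('st \<Rightarrow> 'a \<Rightarrow> real)
    \<Rightarrow> (('st \<times> 'a \<times> 'st) list list \<Rightarrow> bool) \<Rightarrow> real" where
  "data_prob T N D P \<pi>0 E =
     (\<Sum>ds\<in>{ds\<in>datasets T N. E ds}. prod_list (map (traj_prob D P \<pi>0) ds))"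

definition count_sas :: "('st \<times> 'a \<times> 'st) list list \<Rightarrow> 'st \<Rightarrow> 'a \<Rightarrow> 'st \<Rightarrow> nat" where
  "count_sas ds s a s' = length (filter (\<lambda>x. x = (s, a, s')) (concat ds))"

definition count_sa :: "('st \<times> 'a \<times> 'st) list list \<Rightarrow> 'st \<Rightarrow> 'a \<Rightarrow> nat" where
  "count_sa ds s a = length (filter (\<lambda>x. fst x = s \<and> fst (snd x) = a) (concat ds))"

text \<open>Empirical transition estimate; Q is the (arbitrary) distribution used for unvisited (s,a).\<close>
definition P_hat :: "('st \<Rightarrow> 'a \<Rightarrow> 'st \<Rightarrow> real) \<Rightarrow> ('st \<times> 'a \<times> 'st) list list \<Rightarrow> 'st \<Rightarrow> 'a \<Rightarrow> 'st \<Rightarrow> real" where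
  "P_hat Q ds s a s' = (if count_sa ds s a = 0 then Q s a s'
                        else real (count_sas ds s a s') / real (count_sa ds s a))"

end

theory Submission
  imports Defs "HOL-Probability.Hoeffding"
begin

text \<open>
  Each count of a tuple \<open>(s, a, s')\<close> is a sum of \<open>N\<^sub>0\<close> independent per-episode counts in
  \<open>[0, T]\<close> with mean \<open>T \<Lambda>\<^sub>s\<^sub>,\<^sub>a P\<^sub>s\<^sub>,\<^sub>a\<^sub>,\<^sub>s\<^sub>'\<close>, so Hoeffding's inequality and a union bound
  over the \<open>2 |S|\<^sup>2 |A|\<close> tails make all counts accurate with probability \<open>1 - \<delta>\<close>.
  Since \<open>\<Lambda> \<ge> \<lambda>\<^sub>0\<close>, accurate counts give an \<open>\<ell>\<^sub>1\<close>-accurate empirical kernel, and the simulation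
  lemma (the state distributions drift apart by at most \<open>t\<close> times the kernel error) turns this
  into an error of \<open>\<epsilon>/12\<close> in the value and in both group rewards, uniformly over policies.
  That error moves \<open>\<pi>\<^sup>*\<close> into the relaxed empirical constraint set, keeps every empirical
  optimum in \<open>\<Pi>\<^sub>D\<^sub>P\<^sub>,\<^sub>\<epsilon>\<close>, and costs at most \<open>\<epsilon>/6\<close> of value.
\<close>

section \<open>Occupancy measures and the simulation lemma\<close>

lemma sum_weighted_le:
  fixes w g :: "'x \<Rightarrow> real"
  assumes "finite A" "\<forall>x\<in>A. w x \<ge> 0" "sum w A = 1" "\<forall>x\<in>A. g x \<le> B"
  shows "(\<Sum>x\<in>A. w x * g x) \<le> B"
proof -
  have "(\<Sum>x\<in>A. w x * g x) \<le> (\<Sum>x\<in>A. w x * B)"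
    using assms by (intro sum_mono mult_left_mono) auto
  also have "\<dots> = B"
    using assms(3) by (simp add: sum_distrib_right[symmetric])
  finally show ?thesis .
qed

lemma abs_sum_weighted_le:
  fixes w g :: "'x \<Rightarrow> real"
  assumes "finite A" "\<forall>x\<in>A. w x \<ge> 0" "sum w A = 1" "\<forall>x\<in>A. \<bar>g x\<bar> \<le> B"
  shows "\<bar>\<Sum>x\<in>A. w x * g x\<bar> \<le> B"
proof -
  have "\<bar>\<Sum>x\<in>A. w x * g x\<bar> \<le> (\<Sum>x\<in>A. w x * \<bar>g x\<bar>)"
    using assms(2) by (intro order.trans[OF sum_abs] sum_mono) (simp add: abs_mult)
  also have "\<dots> \<le> B"
    using assms by (intro sum_weighted_le) auto
  finally show ?thesis .
qed

lemma Ppi_nonneg: "is_kernel P \<Longrightarrow> is_policy \<pi> \<Longrightarrow> Ppi P \<pi> s s' \<ge> 0"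
  unfolding Ppi_def is_kernel_def is_policy_def by (auto intro!: sum_nonneg)

lemma sum_Ppi: "is_kernel P \<Longrightarrow> is_policy \<pi> \<Longrightarrow> (\<Sum>s'\<in>UNIV. Ppi P \<pi> s s') = 1"
  unfolding Ppi_def is_kernel_def is_policy_def
  by (subst sum.swap) (simp add: sum_distrib_left[symmetric])

lemma is_distr_mu_t:
  assumes "is_distr \<mu>" "is_kernel P" "is_policy \<pi>"
  shows "is_distr (mu_t P \<pi> \<mu> t)"
proof (induction t)
  case 0
  then show ?case using assms by simp
next
  case (Suc t)
  have "(\<Sum>s'\<in>UNIV. \<Sum>s\<in>UNIV. mu_t P \<pi> \<mu> t s * Ppi P \<pi> s s') = (\<Sum>s\<in>UNIV. mu_t P \<pi> \<mu> t s)"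
    by (subst sum.swap) (simp add: sum_distrib_left[symmetric] sum_Ppi assms)
  then show ?case
    using Suc assms unfolding is_distr_def by (auto intro!: sum_nonneg mult_nonneg_nonneg Ppi_nonneg)
qed

lemma mu_t_nonneg: "is_distr \<mu> \<Longrightarrow> is_kernel P \<Longrightarrow> is_policy \<pi> \<Longrightarrow> mu_t P \<pi> \<mu> t s \<ge> 0"
  using is_distr_mu_t unfolding is_distr_def by blast

lemma sum_mu_t: "is_distr \<mu> \<Longrightarrow> is_kernel P \<Longrightarrow> is_policy \<pi> \<Longrightarrow> (\<Sum>s\<in>UNIV. mu_t P \<pi> \<mu> t s) = 1"
  using is_distr_mu_t unfolding is_distr_def by blast

lemma mu_bar_nonneg: "is_distr \<mu> \<Longrightarrow> is_kernel P \<Longrightarrow> is_policy \<pi> \<Longrightarrow> mu_bar T P \<pi> \<mu> s \<ge> 0"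
  unfolding mu_bar_def by (auto intro!: sum_nonneg mu_t_nonneg divide_nonneg_nonneg)

lemma sum_mu_bar:
  assumes "T \<ge> 1" "is_distr \<mu>" "is_kernel P" "is_policy \<pi>"
  shows "(\<Sum>s\<in>UNIV. mu_bar T P \<pi> \<mu> s) = 1"
proof -
  have "(\<Sum>s\<in>UNIV. mu_bar T P \<pi> \<mu> s) = (1 / real T) * (\<Sum>t<T. \<Sum>s\<in>UNIV. mu_t P \<pi> \<mu> t s)"
    unfolding mu_bar_def by (simp only: sum_distrib_left[symmetric], subst sum.swap, rule refl)
  also have "\<dots> = 1"
    using assms by (simp add: sum_mu_t)
  finally show ?thesis .
qed

lemma Ppi_l1_dist_le:
  assumes "is_policy \<pi>" and L1: "\<forall>s a. (\<Sum>s'\<in>UNIV. \<bar>P s a s' - P' s a s'\<bar>) \<le> e"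
  shows "(\<Sum>s'\<in>UNIV. \<bar>Ppi P \<pi> s s' - Ppi P' \<pi> s s'\<bar>) \<le> e"
proof -
  have "(\<Sum>s'\<in>UNIV. \<bar>Ppi P \<pi> s s' - Ppi P' \<pi> s s'\<bar>)
      = (\<Sum>s'\<in>UNIV. \<bar>\<Sum>a\<in>UNIV. \<pi> s a * (P s a s' - P' s a s')\<bar>)"
    unfolding Ppi_def by (simp add: sum_subtractf[symmetric] algebra_simps)
  also have "\<dots> \<le> (\<Sum>s'\<in>UNIV. \<Sum>a\<in>UNIV. \<pi> s a * \<bar>P s a s' - P' s a s'\<bar>)"
    using assms(1) unfolding is_policy_def
    by (intro sum_mono order.trans[OF sum_abs]) (simp add: abs_mult)
  also have "\<dots> = (\<Sum>a\<in>UNIV. \<pi> s a * (\<Sum>s'\<in>UNIV. \<bar>P s a s' - P' s a s'\<bar>))"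
    by (subst sum.swap) (simp add: sum_distrib_left)
  also have "\<dots> \<le> e"
    using assms unfolding is_policy_def by (intro sum_weighted_le) auto
  finally show ?thesis .
qed

text \<open>Simulation lemma: one step of the chain adds at most the transition error to the
  \<open>\<ell>\<^sub>1\<close> distance of the state distributions, because \<open>m P - m' P' = m (P - P') + (m - m') P'\<close>.\<close>

lemma mu_t_l1_dist_le:
  assumes "is_distr \<mu>" "is_kernel P" "is_kernel P'" "is_policy \<pi>"
    and L1: "\<forall>s a. (\<Sum>s'\<in>UNIV. \<bar>P s a s' - P' s a s'\<bar>) \<le> e"
  shows "(\<Sum>s\<in>UNIV. \<bar>mu_t P \<pi> \<mu> t s - mu_t P' \<pi> \<mu> t s\<bar>) \<le> real t * e"
proof (induction t)
  case 0
  then show ?case by simp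
next
  case (Suc t)
  define m where "m = mu_t P \<pi> \<mu> t"
  define m' where "m' = mu_t P' \<pi> \<mu> t"
  have m0: "m s \<ge> 0" for s
    unfolding m_def using mu_t_nonneg assms by blast
  have step: "\<bar>(\<Sum>s\<in>UNIV. m s * Ppi P \<pi> s s') - (\<Sum>s\<in>UNIV. m' s * Ppi P' \<pi> s s')\<bar>
      \<le> (\<Sum>s\<in>UNIV. m s * \<bar>Ppi P \<pi> s s' - Ppi P' \<pi> s s'\<bar> + \<bar>m s - m' s\<bar> * Ppi P' \<pi> s s')" for s'
  proof -
    have "(\<Sum>s\<in>UNIV. m s * Ppi P \<pi> s s') - (\<Sum>s\<in>UNIV. m' s * Ppi P' \<pi> s s')
       = (\<Sum>s\<in>UNIV. m s * (Ppi P \<pi> s s' - Ppi P' \<pi> s s') + (m s - m' s) * Ppi P' \<pi> s s')"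
      by (simp add: sum_subtractf[symmetric] algebra_simps)
    then show ?thesis
      by (auto intro!: order.trans[OF sum_abs] sum_mono order.trans[OF abs_triangle_ineq]
          simp: abs_mult m0 Ppi_nonneg[OF assms(3,4)])
  qed
  have "(\<Sum>s'\<in>UNIV. \<bar>mu_t P \<pi> \<mu> (Suc t) s' - mu_t P' \<pi> \<mu> (Suc t) s'\<bar>)
     \<le> (\<Sum>s'\<in>UNIV. \<Sum>s\<in>UNIV. m s * \<bar>Ppi P \<pi> s s' - Ppi P' \<pi> s s'\<bar> + \<bar>m s - m' s\<bar> * Ppi P' \<pi> s s')"
    using step by (simp add: m_def m'_def sum_mono)
  also have "\<dots> = (\<Sum>s\<in>UNIV. m s * (\<Sum>s'\<in>UNIV. \<bar>Ppi P \<pi> s s' - Ppi P' \<pi> s s'\<bar>))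
        + (\<Sum>s\<in>UNIV. \<bar>m s - m' s\<bar> * (\<Sum>s'\<in>UNIV. Ppi P' \<pi> s s'))"
    by (simp only: sum.distrib, subst (1 2) sum.swap, simp add: sum_distrib_left)
  also have "\<dots> \<le> e + real t * e"
  proof (rule add_mono)
    show "(\<Sum>s\<in>UNIV. m s * (\<Sum>s'\<in>UNIV. \<bar>Ppi P \<pi> s s' - Ppi P' \<pi> s s'\<bar>)) \<le> e"
      using m0 sum_mu_t[OF assms(1,2,4)] Ppi_l1_dist_le[OF assms(4) L1] unfolding m_def
      by (intro sum_weighted_le) auto
    show "(\<Sum>s\<in>UNIV. \<bar>m s - m' s\<bar> * (\<Sum>s'\<in>UNIV. Ppi P' \<pi> s s')) \<le> real t * e"
      using Suc unfolding m_def m'_def sum_Ppi[OF assms(3,4)] by simp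
  qed
  finally show ?case by (simp add: algebra_simps)
qed

lemma sum_lessThan_real_le: "(\<Sum>t<T. real t) \<le> real T ^ 2 / 2"
  by (induction T) (simp_all add: power2_eq_square field_simps)

lemma mu_bar_l1_dist_le:
  assumes T: "T \<ge> 1" and "is_distr \<mu>" "is_kernel P" "is_kernel P'" "is_policy \<pi>"
    and L1: "\<forall>s a. (\<Sum>s'\<in>UNIV. \<bar>P s a s' - P' s a s'\<bar>) \<le> e" and e: "e \<ge> 0"
  shows "(\<Sum>s\<in>UNIV. \<bar>mu_bar T P \<pi> \<mu> s - mu_bar T P' \<pi> \<mu> s\<bar>) \<le> real T * e / 2"
proof -
  have "(\<Sum>s\<in>UNIV. \<bar>mu_bar T P \<pi> \<mu> s - mu_bar T P' \<pi> \<mu> s\<bar>)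
      = (\<Sum>s\<in>UNIV. (1 / real T) * \<bar>\<Sum>t<T. mu_t P \<pi> \<mu> t s - mu_t P' \<pi> \<mu> t s\<bar>)"
    unfolding mu_bar_def right_diff_distrib[symmetric] abs_mult sum_subtractf by simp
  also have "\<dots> \<le> (\<Sum>s\<in>UNIV. (1 / real T) * (\<Sum>t<T. \<bar>mu_t P \<pi> \<mu> t s - mu_t P' \<pi> \<mu> t s\<bar>))"
    by (intro sum_mono mult_left_mono sum_abs) auto
  also have "\<dots> = (1 / real T) * (\<Sum>t<T. \<Sum>s\<in>UNIV. \<bar>mu_t P \<pi> \<mu> t s - mu_t P' \<pi> \<mu> t s\<bar>)"
    by (simp only: sum_distrib_left[symmetric], subst sum.swap, rule refl)
  also have "\<dots> \<le> (1 / real T) * ((\<Sum>t<T. real t) * e)"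
    using mu_t_l1_dist_le[OF assms(2-5) L1]
    by (intro mult_left_mono) (auto simp: sum_distrib_right intro: sum_mono)
  also have "\<dots> \<le> (1 / real T) * (real T ^ 2 / 2 * e)"
    using sum_lessThan_real_le e by (intro mult_right_mono mult_left_mono) auto
  also have "\<dots> = real T * e / 2"
    using T by (simp add: power2_eq_square)
  finally show ?thesis .
qed

definition occupancy_value ::
  "nat \<Rightarrow> ('st::finite \<Rightarrow> 'a::finite \<Rightarrow> 'st \<Rightarrow> real) \<Rightarrow> ('st \<Rightarrow> 'a \<Rightarrow> real) \<Rightarrow> ('st \<Rightarrow> real)
     \<Rightarrow> ('st \<Rightarrow> 'a \<Rightarrow> real) \<Rightarrow> real" where
  "occupancy_value T P \<pi> \<mu> f = (\<Sum>s\<in>UNIV. mu_bar T P \<pi> \<mu> s * (\<Sum>a\<in>UNIV. \<pi> s a * f s a))"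

lemma Rval_eq_occupancy_value: "Rval T P D R \<pi> = occupancy_value T P \<pi> D R"
  unfolding Rval_def Lam_def occupancy_value_def by (simp add: sum_distrib_left mult.assoc)

lemma rho_grp_eq_occupancy_value: "rho_grp T P D \<rho> \<pi> z = occupancy_value T P \<pi> (D_grp D z) \<rho>"
  unfolding rho_grp_def occupancy_value_def by (simp add: sum_distrib_left mult.assoc)

lemma abs_policy_average_le:
  "is_policy \<pi> \<Longrightarrow> \<forall>s a. \<bar>f s a\<bar> \<le> B \<Longrightarrow> \<bar>\<Sum>a\<in>UNIV. \<pi> s a * f s a\<bar> \<le> B"
  unfolding is_policy_def by (intro abs_sum_weighted_le) auto

lemma abs_occupancy_value_le:
  assumes "T \<ge> 1" "is_distr \<mu>" "is_kernel P" "is_policy \<pi>" "\<forall>s a. \<bar>f s a\<bar> \<le> B"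
  shows "\<bar>occupancy_value T P \<pi> \<mu> f\<bar> \<le> B"
  unfolding occupancy_value_def
  using assms by (intro abs_sum_weighted_le) (auto simp: mu_bar_nonneg sum_mu_bar abs_policy_average_le)

lemma occupancy_value_diff_le:
  assumes T: "T \<ge> 1" and "is_distr \<mu>" "is_kernel P" "is_kernel P'" "is_policy \<pi>"
    and L1: "\<forall>s a. (\<Sum>s'\<in>UNIV. \<bar>P s a s' - P' s a s'\<bar>) \<le> e" and e: "e \<ge> 0"
    and f: "\<forall>s a. \<bar>f s a\<bar> \<le> B"
  shows "\<bar>occupancy_value T P \<pi> \<mu> f - occupancy_value T P' \<pi> \<mu> f\<bar> \<le> B * (real T * e / 2)"
proof -
  have B: "B \<ge> 0"
    using f abs_ge_zero order.trans by blast
  have "\<bar>occupancy_value T P \<pi> \<mu> f - occupancy_value T P' \<pi> \<mu> f\<bar>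
      = \<bar>\<Sum>s\<in>UNIV. (mu_bar T P \<pi> \<mu> s - mu_bar T P' \<pi> \<mu> s) * (\<Sum>a\<in>UNIV. \<pi> s a * f s a)\<bar>"
    unfolding occupancy_value_def by (simp add: sum_subtractf[symmetric] left_diff_distrib)
  also have "\<dots> \<le> (\<Sum>s\<in>UNIV. \<bar>mu_bar T P \<pi> \<mu> s - mu_bar T P' \<pi> \<mu> s\<bar> * B)"
    using abs_policy_average_le[OF assms(5) f]
    by (intro order.trans[OF sum_abs] sum_mono) (simp add: abs_mult mult_left_mono)
  also have "\<dots> \<le> (real T * e / 2) * B"
    unfolding sum_distrib_right[symmetric] using mu_bar_l1_dist_le[OF assms(1-7)] B
    by (rule mult_right_mono)
  finally show ?thesis by (simp add: mult.commute)
qed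

section \<open>The plug-in guarantee\<close>

lemma is_distr_D_grp:
  assumes D: "is_distr D" and p: "p_grp D z > 0"
  shows "is_distr (D_grp D z)"
  unfolding is_distr_def
proof (intro conjI allI)
  show "D_grp D z x \<ge> 0" for x
    using D p unfolding D_grp_def is_distr_def by (cases x) auto
  have "(\<Sum>x\<in>UNIV. D_grp D z x) = (\<Sum>g\<in>UNIV. \<Sum>s\<in>UNIV. D_grp D z (g, s))"
    by (simp add: sum.cartesian_product split_def)
  also have "\<dots> = (\<Sum>s\<in>UNIV. D (z, s)) / p_grp D z"
    by (cases z) (simp_all add: D_grp_def UNIV_grp sum_divide_distrib[symmetric])
  also have "\<dots> = 1"
    using p unfolding p_grp_def by simp
  finally show "(\<Sum>x\<in>UNIV. D_grp D z x) = 1" .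
qed

definition plug_in_guarantee ::
  "nat \<Rightarrow> (grp \<times> 's::finite \<Rightarrow> 'a::finite \<Rightarrow> grp \<times> 's \<Rightarrow> real) \<Rightarrow> (grp \<times> 's \<Rightarrow> 'a \<Rightarrow> grp \<times> 's \<Rightarrow> real)
     \<Rightarrow> (grp \<times> 's \<Rightarrow> real) \<Rightarrow> (grp \<times> 's \<Rightarrow> 'a \<Rightarrow> real) \<Rightarrow> (grp \<times> 's \<Rightarrow> 'a \<Rightarrow> real) \<Rightarrow> real
     \<Rightarrow> (grp \<times> 's \<Rightarrow> 'a \<Rightarrow> real) \<Rightarrow> bool" where
  "plug_in_guarantee T P P' D R \<rho> \<epsilon> pistar \<longleftrightarrow>
     PiDP T P' D \<rho> (\<epsilon> / 2) \<noteq> {} \<and>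
     (\<forall>pihat. (pihat \<in> PiDP T P' D \<rho> (\<epsilon> / 2) \<and>
               (\<forall>\<pi>\<in>PiDP T P' D \<rho> (\<epsilon> / 2). Rval T P' D R \<pi> \<le> Rval T P' D R pihat))
             \<longrightarrow> pihat \<in> PiDP T P D \<rho> \<epsilon> \<and> Rval T P D R pistar - Rval T P D R pihat \<le> \<epsilon>)"

lemma plug_in_guarantee_if_uniformly_close:
  assumes errR: "\<forall>\<pi>. is_policy \<pi> \<longrightarrow> \<bar>Rval T P' D R \<pi> - Rval T P D R \<pi>\<bar> \<le> \<epsilon> / 12"
    and err\<rho>: "\<forall>\<pi> z. is_policy \<pi> \<longrightarrow> \<bar>rho_grp T P' D \<rho> \<pi> z - rho_grp T P D \<rho> \<pi> z\<bar> \<le> \<epsilon> / 12"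
    and eps: "\<epsilon> > 0"
    and pistar_in: "pistar \<in> PiDP T P D \<rho> (\<epsilon> / 4)"
  shows "plug_in_guarantee T P P' D R \<rho> \<epsilon> pistar"
  unfolding plug_in_guarantee_def
proof (intro conjI allI impI)
  have dev: "\<bar>rho_grp T P' D \<rho> \<pi> z - rho_grp T P D \<rho> \<pi> z\<bar> \<le> \<epsilon> / 12" if "is_policy \<pi>" for \<pi> z
    using err\<rho> that by blast
  have ps: "is_policy pistar"
    using pistar_in unfolding PiDP_def by simp
  have "\<bar>rho_grp T P D \<rho> pistar Maj - rho_grp T P D \<rho> pistar Min\<bar> \<le> \<epsilon> / 4"
    using pistar_in unfolding PiDP_def by simp
  then have "\<bar>rho_grp T P' D \<rho> pistar Maj - rho_grp T P' D \<rho> pistar Min\<bar> \<le> \<epsilon> / 2"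
    using dev[OF ps, of Maj] dev[OF ps, of Min] eps unfolding abs_le_iff by linarith
  then have pistar_in': "pistar \<in> PiDP T P' D \<rho> (\<epsilon> / 2)"
    unfolding PiDP_def using ps by simp
  then show "PiDP T P' D \<rho> (\<epsilon> / 2) \<noteq> {}" by blast
  fix pihat
  assume h: "pihat \<in> PiDP T P' D \<rho> (\<epsilon> / 2) \<and>
               (\<forall>\<pi>\<in>PiDP T P' D \<rho> (\<epsilon> / 2). Rval T P' D R \<pi> \<le> Rval T P' D R pihat)"
  have ph: "is_policy pihat"
    using h unfolding PiDP_def by simp
  have "\<bar>rho_grp T P' D \<rho> pihat Maj - rho_grp T P' D \<rho> pihat Min\<bar> \<le> \<epsilon> / 2"
    using h unfolding PiDP_def by simp
  then have "\<bar>rho_grp T P D \<rho> pihat Maj - rho_grp T P D \<rho> pihat Min\<bar> \<le> \<epsilon>"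
    using dev[OF ph, of Maj] dev[OF ph, of Min] eps unfolding abs_le_iff by linarith
  then show "pihat \<in> PiDP T P D \<rho> \<epsilon>"
    unfolding PiDP_def using ph by simp
  have "Rval T P' D R pistar \<le> Rval T P' D R pihat"
    using h pistar_in' by blast
  moreover have "\<bar>Rval T P' D R pistar - Rval T P D R pistar\<bar> \<le> \<epsilon> / 12"
    and "\<bar>Rval T P' D R pihat - Rval T P D R pihat\<bar> \<le> \<epsilon> / 12"
    using errR ps ph by auto
  ultimately show "Rval T P D R pistar - Rval T P D R pihat \<le> \<epsilon>"
    using eps unfolding abs_le_iff by linarith
qed

lemma uniform_policy: "is_policy (\<lambda>(s::'st::finite) (a::'a::finite). 1 / real (card (UNIV :: 'a set)))"
  unfolding is_policy_def by simp

text \<open>If \<open>\<epsilon> \<ge> 4 R\<^sub>m\<^sub>a\<^sub>x\<close>, every policy is fair enough in every model and every value gap is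
  at most \<open>2 R\<^sub>m\<^sub>a\<^sub>x\<close>, so the guarantee holds for arbitrary estimates.\<close>

lemma plug_in_guarantee_if_rewards_small:
  assumes T: "T \<ge> 1" and D: "is_distr D" and P: "is_kernel P" and P': "is_kernel P'"
    and pmaj: "p_grp D Maj > 0" and pmin: "p_grp D Min > 0"
    and Rbd: "\<forall>s a. \<bar>R s a\<bar> \<le> Rmax" and \<rho>bd: "\<forall>s a. \<bar>\<rho> s a\<bar> \<le> Rmax"
    and small: "4 * Rmax \<le> \<epsilon>"
    and pistar_in: "pistar \<in> PiDP T P D \<rho> (\<epsilon> / 4)"
  shows "plug_in_guarantee T P P' D R \<rho> \<epsilon> pistar"
  unfolding plug_in_guarantee_def
proof (intro conjI allI impI)
  have Rmax: "Rmax \<ge> 0"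
    using Rbd abs_ge_zero order.trans by blast
  have rho_bound: "\<bar>rho_grp T P1 D \<rho> \<pi> z\<bar> \<le> Rmax" if "is_kernel P1" "is_policy \<pi>" for P1 \<pi> z
  proof -
    have "is_distr (D_grp D z)"
      using is_distr_D_grp[OF D] pmaj pmin by (cases z) auto
    then show ?thesis
      unfolding rho_grp_eq_occupancy_value using T that \<rho>bd by (intro abs_occupancy_value_le)
  qed
  have fair: "\<pi> \<in> PiDP T P1 D \<rho> (\<epsilon> / 2)" if "is_kernel P1" "is_policy \<pi>" for P1 \<pi>
  proof -
    have "\<bar>rho_grp T P1 D \<rho> \<pi> Maj - rho_grp T P1 D \<rho> \<pi> Min\<bar> \<le> \<epsilon> / 2"
      using rho_bound[OF that, of Maj] rho_bound[OF that, of Min] small unfolding abs_le_iff by linarith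
    then show ?thesis
      unfolding PiDP_def using that(2) by simp
  qed
  show "PiDP T P' D \<rho> (\<epsilon> / 2) \<noteq> {}"
    using fair[OF P' uniform_policy] by blast
  fix pihat
  assume "pihat \<in> PiDP T P' D \<rho> (\<epsilon> / 2) \<and>
            (\<forall>\<pi>\<in>PiDP T P' D \<rho> (\<epsilon> / 2). Rval T P' D R \<pi> \<le> Rval T P' D R pihat)"
  then have ph: "is_policy pihat"
    unfolding PiDP_def by simp
  show "pihat \<in> PiDP T P D \<rho> \<epsilon>"
    using fair[OF P ph] Rmax small unfolding PiDP_def by auto
  have ps: "is_policy pistar"
    using pistar_in unfolding PiDP_def by simp
  have "\<bar>Rval T P D R \<pi>\<bar> \<le> Rmax" if "is_policy \<pi>" for \<pi>
    unfolding Rval_eq_occupancy_value using T D P that Rbd by (intro abs_occupancy_value_le)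
  from this[OF ps] this[OF ph] show "Rval T P D R pistar - Rval T P D R pihat \<le> \<epsilon>"
    using small unfolding abs_le_iff by linarith
qed

lemma plug_in_guarantee_if_l1_close:
  assumes T: "T \<ge> 1" and D: "is_distr D" and P: "is_kernel P" and P': "is_kernel P'"
    and pmaj: "p_grp D Maj > 0" and pmin: "p_grp D Min > 0"
    and Rmax: "Rmax > 0" and Rbd: "\<forall>s a. \<bar>R s a\<bar> \<le> Rmax" and \<rho>bd: "\<forall>s a. \<bar>\<rho> s a\<bar> \<le> Rmax"
    and L1: "\<forall>s a. (\<Sum>s'\<in>UNIV. \<bar>P s a s' - P' s a s'\<bar>) \<le> \<epsilon> / (6 * real T * Rmax)"
    and eps: "\<epsilon> > 0"
    and pistar_in: "pistar \<in> PiDP T P D \<rho> (\<epsilon> / 4)"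
  shows "plug_in_guarantee T P P' D R \<rho> \<epsilon> pistar"
proof (rule plug_in_guarantee_if_uniformly_close[OF _ _ eps pistar_in])
  have e: "\<epsilon> / (6 * real T * Rmax) \<ge> 0"
    using eps Rmax by simp
  have err: "Rmax * (real T * (\<epsilon> / (6 * real T * Rmax)) / 2) = \<epsilon> / 12"
    using T Rmax by (simp add: field_simps)
  have "is_distr (D_grp D z)" for z
    using is_distr_D_grp[OF D] pmaj pmin by (cases z) auto
  show "\<forall>\<pi>. is_policy \<pi> \<longrightarrow> \<bar>Rval T P' D R \<pi> - Rval T P D R \<pi>\<bar> \<le> \<epsilon> / 12"
    using occupancy_value_diff_le[OF T D P P' _ L1 e Rbd] unfolding Rval_eq_occupancy_value err
    by (simp add: abs_minus_commute)
  show "\<forall>\<pi> z. is_policy \<pi> \<longrightarrow> \<bar>rho_grp T P' D \<rho> \<pi> z - rho_grp T P D \<rho> \<pi> z\<bar> \<le> \<epsilon> / 12"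
    using occupancy_value_diff_le[OF T \<open>is_distr (D_grp D _)\<close> P P' _ L1 e \<rho>bd]
    unfolding rho_grp_eq_occupancy_value err by (simp add: abs_minus_commute)
qed

section \<open>The empirical transition estimate\<close>

lemma count_sa_eq_sum_count_sas:
  fixes ds :: "('st::finite \<times> 'a \<times> 'st) list list"
  shows "count_sa ds s a = (\<Sum>s'\<in>UNIV. count_sas ds s a s')"
proof -
  have "length (filter (\<lambda>x. fst x = s \<and> fst (snd x) = a) L)
      = (\<Sum>s'\<in>UNIV. length (filter (\<lambda>x. x = (s, a, s')) L))" for L :: "('st \<times> 'a \<times> 'st) list"
  proof (induction L)
    case (Cons y L)
    have "(\<Sum>s'\<in>UNIV. length (filter (\<lambda>x. x = (s, a, s')) (y # L)))
        = (\<Sum>s'\<in>UNIV. (if s' = snd (snd y) \<and> fst y = s \<and> fst (snd y) = a then 1 else 0)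
            + length (filter (\<lambda>x. x = (s, a, s')) L))"
      by (intro sum.cong refl) (auto simp: prod_eq_iff)
    also have "\<dots> = (if fst y = s \<and> fst (snd y) = a then 1 else 0) + length (filter (\<lambda>x. fst x = s \<and> fst (snd x) = a) L)"
      unfolding sum.distrib Cons.IH by (cases "fst y = s \<and> fst (snd y) = a") auto
    finally show ?case by simp
  qed simp
  then show ?thesis
    unfolding count_sa_def count_sas_def .
qed

lemma is_kernel_P_hat:
  assumes Q: "is_kernel Q"
  shows "is_kernel (P_hat Q ds)"
  unfolding is_kernel_def
proof (intro conjI allI)
  show "P_hat Q ds s a s' \<ge> 0" for s a s'
    using Q unfolding P_hat_def is_kernel_def by auto
  show "(\<Sum>s'\<in>UNIV. P_hat Q ds s a s') = 1" for s a
  proof (cases "count_sa ds s a = 0")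
    case True
    then show ?thesis using Q unfolding P_hat_def is_kernel_def by simp
  next
    case False
    then have "(\<Sum>s'\<in>UNIV. P_hat Q ds s a s') = (\<Sum>s'\<in>UNIV. real (count_sas ds s a s')) / real (count_sa ds s a)"
      unfolding P_hat_def by (simp add: sum_divide_distrib)
    also have "\<dots> = 1"
      using False by (simp add: count_sa_eq_sum_count_sas of_nat_sum[symmetric] del: of_nat_sum)
    finally show ?thesis .
  qed
qed

lemma abs_sum_counts_diff_le:
  fixes C p :: "'x::finite \<Rightarrow> real"
  assumes dev: "\<forall>x. \<bar>C x - n * p x\<bar> \<le> M" and p1: "(\<Sum>x\<in>UNIV. p x) = 1"
  shows "\<bar>(\<Sum>x\<in>UNIV. C x) - n\<bar> \<le> real (card (UNIV :: 'x set)) * M"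
proof -
  have "\<bar>(\<Sum>x\<in>UNIV. C x) - n\<bar> = \<bar>\<Sum>x\<in>UNIV. C x - n * p x\<bar>"
    using p1 by (simp add: sum_subtractf sum_distrib_left[symmetric])
  also have "\<dots> \<le> (\<Sum>x\<in>(UNIV :: 'x set). M)"
    using dev by (intro order.trans[OF sum_abs] sum_mono) auto
  finally show ?thesis by simp
qed

text \<open>For the total count \<open>S\<close>, write \<open>S p - C = (n p - C) + (S - n) p\<close>.\<close>

lemma normalized_counts_l1_dist_le:
  fixes C p :: "'x::finite \<Rightarrow> real"
  assumes dev: "\<forall>x. \<bar>C x - n * p x\<bar> \<le> M" and p0: "\<forall>x. p x \<ge> 0" and p1: "(\<Sum>x\<in>UNIV. p x) = 1"
    and small: "real (card (UNIV :: 'x set)) * M \<le> n / 4" and n: "n > 0"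
  shows "(\<Sum>x\<in>UNIV. \<bar>p x - C x / (\<Sum>y\<in>UNIV. C y)\<bar>) \<le> 8 * real (card (UNIV :: 'x set)) * M / (3 * n)"
proof -
  define K where "K = real (card (UNIV :: 'x set))"
  define S where "S = (\<Sum>y\<in>UNIV. C y)"
  have dev_sum: "(\<Sum>x\<in>UNIV. \<bar>C x - n * p x\<bar>) \<le> K * M"
    using sum_mono[of UNIV "\<lambda>x. \<bar>C x - n * p x\<bar>" "\<lambda>_. M"] dev unfolding K_def by simp
  have S_dev: "\<bar>S - n\<bar> \<le> K * M"
    using abs_sum_counts_diff_le[OF dev p1] unfolding S_def K_def .
  then have S: "S \<ge> 3 * n / 4"
    using small unfolding K_def by linarith
  have "\<bar>p x - C x / S\<bar> = \<bar>S * p x - C x\<bar> / S" for x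
  proof -
    have "p x - C x / S = (S * p x - C x) / S"
      using S n by (simp add: field_simps)
    then show ?thesis
      using S n by simp
  qed
  then have "(\<Sum>x\<in>UNIV. \<bar>p x - C x / S\<bar>) = (\<Sum>x\<in>UNIV. \<bar>S * p x - C x\<bar>) / S"
    by (simp add: sum_divide_distrib)
  also have "\<dots> \<le> (\<Sum>x\<in>UNIV. \<bar>C x - n * p x\<bar> + \<bar>S - n\<bar> * p x) / S"
  proof (rule divide_right_mono[OF sum_mono])
    fix x
    have "\<bar>S * p x - C x\<bar> \<le> \<bar>n * p x - C x\<bar> + \<bar>(S - n) * p x\<bar>"
      using abs_triangle_ineq[of "n * p x - C x" "(S - n) * p x"] by (simp add: algebra_simps)
    then show "\<bar>S * p x - C x\<bar> \<le> \<bar>C x - n * p x\<bar> + \<bar>S - n\<bar> * p x"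
      using p0 by (simp add: abs_mult abs_minus_commute)
  qed (use S n in simp)
  also have "\<dots> = ((\<Sum>x\<in>UNIV. \<bar>C x - n * p x\<bar>) + \<bar>S - n\<bar>) / S"
    using p1 by (simp add: sum.distrib sum_distrib_left[symmetric])
  also have "\<dots> \<le> (2 * K * M) / (3 * n / 4)"
  proof (rule frac_le)
    have "M \<ge> 0"
      using dev abs_ge_zero order.trans by blast
    then show "0 \<le> 2 * K * M"
      unfolding K_def by simp
    show "(\<Sum>x\<in>UNIV. \<bar>C x - n * p x\<bar>) + \<bar>S - n\<bar> \<le> 2 * K * M"
      using dev_sum S_dev by linarith
    show "0 < 3 * n / 4" "3 * n / 4 \<le> S"
      using n S by simp_all
  qed
  also have "\<dots> = 8 * K * M / (3 * n)"
    by (simp add: field_simps)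
  finally show ?thesis
    unfolding S_def K_def .
qed

text \<open>\<open>N T \<Lambda>\<^sup>(\<^sup>\<pi>\<^sup>0\<^sup>)\<^sub>s\<^sub>,\<^sub>a P\<^sub>s\<^sub>,\<^sub>a\<^sub>,\<^sub>s\<^sub>'\<close> is the expected number of occurrences of
  \<open>(s, a, s')\<close> in \<open>N\<close> episodes (lemma \<open>expected_count\<close>).\<close>

definition counts_close ::
  "nat \<Rightarrow> nat \<Rightarrow> ('st::finite \<Rightarrow> real) \<Rightarrow> ('st \<Rightarrow> 'a::finite \<Rightarrow> 'st \<Rightarrow> real) \<Rightarrow> ('st \<Rightarrow> 'a \<Rightarrow> real)
     \<Rightarrow> real \<Rightarrow> ('st \<times> 'a \<times> 'st) list list \<Rightarrow> bool" where
  "counts_close T N D P pi0 u ds \<longleftrightarrow>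
     (\<forall>s a s'. \<bar>real (count_sas ds s a s') - real N * (real T * Lam T P D pi0 s a * P s a s')\<bar> < real N * u)"

lemma P_hat_eq_normalized_counts:
  fixes ds :: "('st::finite \<times> 'a \<times> 'st) list list"
  assumes "(\<Sum>y\<in>UNIV. real (count_sas ds s a y)) > 0"
  shows "P_hat Q ds s a s' = real (count_sas ds s a s') / (\<Sum>y\<in>UNIV. real (count_sas ds s a y))"
proof -
  have "real (count_sa ds s a) = (\<Sum>y\<in>UNIV. real (count_sas ds s a y))"
    unfolding count_sa_eq_sum_count_sas by simp
  with assms show ?thesis
    unfolding P_hat_def by auto
qed

lemma P_hat_l1_dist_le:
  fixes P Q :: "'st::finite \<Rightarrow> 'a::finite \<Rightarrow> 'st \<Rightarrow> real"
  assumes T: "T \<ge> 1" and P: "is_kernel P" and close: "counts_close T N D P pi0 u ds"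
    and lam0: "lam0 > 0" "Lam T P D pi0 s a \<ge> lam0"
    and small: "real (card (UNIV :: 'st set)) * u \<le> lam0 / 4"
  shows "(\<Sum>s'\<in>UNIV. \<bar>P s a s' - P_hat Q ds s a s'\<bar>) \<le> 8 * real (card (UNIV :: 'st set)) * u / (3 * real T * lam0)"
proof -
  define K where "K = real (card (UNIV :: 'st set))"
  define C where "C s' = real (count_sas ds s a s')" for s'
  define n where "n = real N * real T * Lam T P D pi0 s a"
  have dev: "\<forall>s'. \<bar>C s' - n * P s a s'\<bar> \<le> real N * u"
    using close unfolding counts_close_def C_def n_def by (simp add: less_imp_le algebra_simps)
  have "0 < real N * u"
    using close unfolding counts_close_def by (meson abs_ge_zero le_less_trans)
  then have N: "real N > 0" and u: "u > 0"
    by (auto simp: zero_less_mult_iff)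
  have "1 * Lam T P D pi0 s a \<le> real T * Lam T P D pi0 s a"
    using T lam0 by (intro mult_right_mono) auto
  with lam0 have Tlam: "lam0 \<le> real T * Lam T P D pi0 s a"
    by linarith
  have n: "n > 0"
    unfolding n_def using N T lam0 by simp
  have small': "K * (real N * u) \<le> n / 4"
    using mult_left_mono[OF small, of "real N"] mult_left_mono[OF Tlam, of "real N"] N
    unfolding K_def n_def by (simp add: algebra_simps)
  have P0: "\<forall>s'. P s a s' \<ge> 0" and P1: "(\<Sum>s'\<in>UNIV. P s a s') = 1"
    using P unfolding is_kernel_def by auto
  have "\<bar>(\<Sum>s'\<in>UNIV. C s') - n\<bar> \<le> n / 4"
    using abs_sum_counts_diff_le[OF dev P1] small' unfolding K_def by linarith
  then have "P_hat Q ds s a s' = C s' / (\<Sum>y\<in>UNIV. C y)" for s'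
    using n unfolding C_def by (intro P_hat_eq_normalized_counts) linarith
  then have "(\<Sum>s'\<in>UNIV. \<bar>P s a s' - P_hat Q ds s a s'\<bar>) \<le> 8 * K * (real N * u) / (3 * n)"
    unfolding K_def by (simp add: normalized_counts_l1_dist_le[OF dev P0 P1 small'[unfolded K_def] n])
  also have "\<dots> = 8 * K * u / (3 * (real T * Lam T P D pi0 s a))"
    unfolding n_def using N by (simp add: field_simps)
  also have "\<dots> \<le> 8 * K * u / (3 * (real T * lam0))"
    using T lam0 u unfolding K_def by (intro divide_left_mono mult_left_mono) auto
  finally show ?thesis
    unfolding K_def by (simp add: mult.assoc)
qed

section \<open>The law of an episode\<close>

lemma finite_valid_traj: "finite {tr :: ('st::finite \<times> 'a::finite \<times> 'st) list. valid_traj T tr}"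
proof (rule finite_subset)
  show "{tr :: ('st \<times> 'a \<times> 'st) list. valid_traj T tr} \<subseteq> {xs. set xs \<subseteq> UNIV \<and> length xs = T}"
    unfolding valid_traj_def by auto
qed (rule finite_lists_length_eq, simp)

lemma valid_traj_Suc_not_Nil: "valid_traj (Suc T) tr \<Longrightarrow> tr \<noteq> []"
  unfolding valid_traj_def by auto

lemma valid_traj_snoc_iff:
  assumes "T \<ge> 1"
  shows "valid_traj (Suc T) (tr @ [x]) \<longleftrightarrow> valid_traj T tr \<and> fst x = snd (snd (last tr))"
proof
  assume v: "valid_traj (Suc T) (tr @ [x])"
  then have len: "length tr = T" unfolding valid_traj_def by simp
  then have ne: "tr \<noteq> []" using assms by auto
  have ch: "snd (snd ((tr @ [x]) ! i)) = fst ((tr @ [x]) ! Suc i)" if "Suc i < Suc T" for i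
    using v that unfolding valid_traj_def by blast
  have "snd (snd (tr ! i)) = fst (tr ! Suc i)" if "Suc i < T" for i
    using ch[of i] that len by (simp add: nth_append)
  then have "valid_traj T tr" using len unfolding valid_traj_def by blast
  moreover have "fst x = snd (snd (last tr))"
  proof -
    have "snd (snd ((tr @ [x]) ! (T - 1))) = fst ((tr @ [x]) ! Suc (T - 1))"
      using ch[of "T - 1"] assms by simp
    then show ?thesis using len assms ne by (simp add: nth_append last_conv_nth)
  qed
  ultimately show "valid_traj T tr \<and> fst x = snd (snd (last tr))" by blast
next
  assume a: "valid_traj T tr \<and> fst x = snd (snd (last tr))"
  then have len: "length tr = T" unfolding valid_traj_def by simp
  then have ne: "tr \<noteq> []" using assms by auto
  have "snd (snd ((tr @ [x]) ! i)) = fst ((tr @ [x]) ! Suc i)" if "Suc i < Suc T" for i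
  proof (cases "Suc i < T")
    case True then show ?thesis using a len unfolding valid_traj_def by (simp add: nth_append)
  next
    case False
    then have "i = T - 1" using that by simp
    then show ?thesis using a len ne assms by (simp add: nth_append last_conv_nth)
  qed
  then show "valid_traj (Suc T) (tr @ [x])" using len unfolding valid_traj_def by simp
qed

lemma valid_traj_Suc_eq_image:
  assumes "T \<ge> 1"
  shows "{tr :: ('st \<times> 'a \<times> 'st) list. valid_traj (Suc T) tr} =
    (\<lambda>(tr, a, s'). tr @ [(snd (snd (last tr)), a, s')]) ` ({tr. valid_traj T tr} \<times> UNIV)"
proof (intro equalityI subsetI)
  fix tr' :: "('st \<times> 'a \<times> 'st) list"
  assume "tr' \<in> {tr. valid_traj (Suc T) tr}"
  then have v: "valid_traj (Suc T) tr'" by simp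
  then have "tr' \<noteq> []" by (rule valid_traj_Suc_not_Nil)
  then obtain tr s a s' where tr': "tr' = tr @ [(s, a, s')]"
    by (metis rev_exhaust prod_cases3)
  then have "valid_traj T tr \<and> s = snd (snd (last tr))"
    using v valid_traj_snoc_iff[OF assms, of tr "(s, a, s')"] by simp
  then show "tr' \<in> (\<lambda>(tr, a, s'). tr @ [(snd (snd (last tr)), a, s')]) ` ({tr. valid_traj T tr} \<times> UNIV)"
    using tr' by (auto intro!: image_eqI[where x = "(tr, a, s')"])
qed (auto simp: valid_traj_snoc_iff[OF assms])

lemma sum_valid_traj_Suc:
  fixes g :: "('st::finite \<times> 'a::finite \<times> 'st) list \<Rightarrow> real"
  assumes "T \<ge> 1"
  shows "(\<Sum>tr\<in>{tr. valid_traj (Suc T) tr}. g tr) =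
    (\<Sum>tr\<in>{tr. valid_traj T tr}. \<Sum>a\<in>UNIV. \<Sum>s'\<in>UNIV. g (tr @ [(snd (snd (last tr)), a, s')]))"
proof -
  have inj: "inj_on (\<lambda>(tr, a, s'). tr @ [(snd (snd (last tr)), a, s')])
      ({tr. valid_traj T tr} \<times> (UNIV :: ('a \<times> 'st) set))"
    by (auto simp: inj_on_def)
  have "(\<Sum>tr\<in>{tr. valid_traj (Suc T) tr}. g tr) =
      (\<Sum>(tr, a, s')\<in>{tr. valid_traj T tr} \<times> UNIV. g (tr @ [(snd (snd (last tr)), a, s')]))"
    unfolding valid_traj_Suc_eq_image[OF assms] by (subst sum.reindex[OF inj]) (simp add: comp_def split_def)
  then show ?thesis
    by (simp add: sum.cartesian_product' split_def flip: UNIV_Times_UNIV)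
qed

lemma sum_valid_traj_1:
  fixes g :: "('st::finite \<times> 'a::finite \<times> 'st) list \<Rightarrow> real"
  shows "(\<Sum>tr\<in>{tr. valid_traj (Suc 0) tr}. g tr) = (\<Sum>x\<in>UNIV. g [x])"
proof -
  have "{tr. valid_traj (Suc 0) tr} = (\<lambda>x. [x]) ` UNIV"
    unfolding valid_traj_def by (auto simp: length_Suc_conv)
  then show ?thesis
    by (metis (no_types, lifting) inj_def list.inject sum.reindex_cong)
qed

lemma traj_prob_singleton: "traj_prob D P pi0 [(s, a, s')] = D s * (pi0 s a * P s a s')"
  unfolding traj_prob_def by simp

lemma traj_prob_snoc:
  "tr \<noteq> [] \<Longrightarrow> traj_prob D P pi0 (tr @ [(s, a, s')]) = traj_prob D P pi0 tr * (pi0 s a * P s a s')"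
  unfolding traj_prob_def by (simp add: nth_append mult.assoc)

lemma traj_prob_nonneg:
  "is_distr D \<Longrightarrow> is_kernel P \<Longrightarrow> is_policy pi0 \<Longrightarrow> traj_prob D P pi0 tr \<ge> 0"
  unfolding traj_prob_def is_distr_def is_kernel_def is_policy_def
  by (auto intro!: mult_nonneg_nonneg prod_nonneg split: prod.splits)

lemma sum_mu_Ppi_mult:
  fixes m :: "'st::finite \<Rightarrow> real" and P :: "'st \<Rightarrow> 'a::finite \<Rightarrow> 'st \<Rightarrow> real"
  shows "(\<Sum>s'\<in>UNIV. (\<Sum>s\<in>UNIV. m s * Ppi P \<pi> s s') * h s')
     = (\<Sum>s\<in>UNIV. m s * (\<Sum>a\<in>UNIV. \<Sum>s'\<in>UNIV. \<pi> s a * P s a s' * h s'))"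
proof -
  have "(\<Sum>s'\<in>UNIV. (\<Sum>s\<in>UNIV. m s * Ppi P \<pi> s s') * h s')
      = (\<Sum>s'\<in>UNIV. \<Sum>s\<in>UNIV. \<Sum>a\<in>UNIV. m s * (\<pi> s a * P s a s' * h s'))"
    by (simp add: Ppi_def sum_distrib_left sum_distrib_right mult.assoc)
  also have "\<dots> = (\<Sum>s\<in>UNIV. \<Sum>a\<in>UNIV. \<Sum>s'\<in>UNIV. m s * (\<pi> s a * P s a s' * h s'))"
    by (subst sum.swap) (rule sum.cong[OF refl sum.swap])
  finally show ?thesis
    by (simp add: sum_distrib_left)
qed

lemma sum_if_triple_eq:
  fixes f :: "'a::finite \<Rightarrow> 'st::finite \<Rightarrow> real"
  shows "(\<Sum>a\<in>UNIV. \<Sum>s'\<in>UNIV. if (s, a, s') = (s0, a0, s1) then f a s' else 0)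
     = (if s = s0 then f a0 s1 else 0)"
proof -
  have "(\<Sum>s'\<in>UNIV. if (s, a, s') = (s0, a0, s1) then f a s' else 0) = (if s = s0 \<and> a = a0 then f a s1 else 0)"
    for a
    by (cases "s = s0 \<and> a = a0") auto
  then show ?thesis
    by (cases "s = s0") auto
qed

locale episode_model =
  fixes D :: "'st::finite \<Rightarrow> real" and P :: "'st \<Rightarrow> 'a::finite \<Rightarrow> 'st \<Rightarrow> real"
    and pi0 :: "'st \<Rightarrow> 'a \<Rightarrow> real"
  assumes D: "is_distr D" and P: "is_kernel P" and pi0: "is_policy pi0"
begin

lemma sum_traj_prob_last_state:
  "(\<Sum>tr\<in>{tr. valid_traj (Suc k) tr}. traj_prob D P pi0 tr * h (snd (snd (last tr))))
     = (\<Sum>s\<in>UNIV. mu_t P pi0 D (Suc k) s * h s)"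
proof (induction k arbitrary: h)
  case 0
  have "(\<Sum>tr\<in>{tr. valid_traj (Suc 0) tr}. traj_prob D P pi0 tr * h (snd (snd (last tr))))
      = (\<Sum>s\<in>UNIV. D s * (\<Sum>a\<in>UNIV. \<Sum>s'\<in>UNIV. pi0 s a * P s a s' * h s'))"
    unfolding sum_valid_traj_1 UNIV_Times_UNIV[symmetric] sum.cartesian_product'
    by (simp add: traj_prob_singleton sum_distrib_left mult.assoc)
  then show ?case
    by (simp add: sum_mu_Ppi_mult)
next
  case (Suc k)
  define H where "H s = (\<Sum>a\<in>UNIV. \<Sum>s'\<in>UNIV. pi0 s a * P s a s' * h s')" for s
  have "(\<Sum>tr\<in>{tr. valid_traj (Suc (Suc k)) tr}. traj_prob D P pi0 tr * h (snd (snd (last tr))))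
      = (\<Sum>tr\<in>{tr. valid_traj (Suc k) tr}. traj_prob D P pi0 tr * H (snd (snd (last tr))))"
    unfolding sum_valid_traj_Suc[of "Suc k", simplified]
    by (intro sum.cong refl)
      (simp add: traj_prob_snoc[OF valid_traj_Suc_not_Nil] H_def sum_distrib_left mult.assoc)
  also have "\<dots> = (\<Sum>s\<in>UNIV. mu_t P pi0 D (Suc k) s * H s)"
    by (rule Suc.IH)
  also have "\<dots> = (\<Sum>s'\<in>UNIV. (\<Sum>s\<in>UNIV. mu_t P pi0 D (Suc k) s * Ppi P pi0 s s') * h s')"
    unfolding H_def by (rule sum_mu_Ppi_mult[symmetric])
  finally show ?case
    by simp
qed

lemma sum_traj_prob: "T \<ge> 1 \<Longrightarrow> (\<Sum>tr\<in>{tr. valid_traj T tr}. traj_prob D P pi0 tr) = 1"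
  using sum_traj_prob_last_state[where k = "T - 1" and h = "\<lambda>_. 1"] sum_mu_t[OF D P pi0] by simp

lemma sum_P: "(\<Sum>s'\<in>UNIV. P s a s') = 1"
  using P unfolding is_kernel_def by simp

lemma sum_pi0: "(\<Sum>a\<in>UNIV. pi0 s a) = 1"
  using pi0 unfolding is_policy_def by simp

lemma sum_traj_prob_nth_eq:
  "t \<le> k \<Longrightarrow> (\<Sum>tr\<in>{tr. valid_traj (Suc k) tr}. if tr ! t = (s0, a0, s1) then traj_prob D P pi0 tr else 0)
     = mu_t P pi0 D t s0 * pi0 s0 a0 * P s0 a0 s1"
proof (induction k arbitrary: t)
  case 0
  then show ?case
    by (simp add: sum_valid_traj_1 traj_prob_singleton mult.assoc)
next
  case (Suc k)
  let ?ext = "\<lambda>(tr :: ('st \<times> 'a \<times> 'st) list) a s'. tr @ [(snd (snd (last tr)), a, s')]"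
  have "(\<Sum>tr\<in>{tr. valid_traj (Suc (Suc k)) tr}. if tr ! t = (s0, a0, s1) then traj_prob D P pi0 tr else 0)
      = (\<Sum>tr\<in>{tr. valid_traj (Suc k) tr}. \<Sum>a\<in>UNIV. \<Sum>s'\<in>UNIV.
          if ?ext tr a s' ! t = (s0, a0, s1)
          then traj_prob D P pi0 tr * (pi0 (snd (snd (last tr))) a * P (snd (snd (last tr))) a s') else 0)"
    unfolding sum_valid_traj_Suc[of "Suc k", simplified]
    by (intro sum.cong refl) (simp add: traj_prob_snoc[OF valid_traj_Suc_not_Nil])
  also have "\<dots> = mu_t P pi0 D t s0 * pi0 s0 a0 * P s0 a0 s1"
  proof (cases "t \<le> k")
    case True
    have nth_ext: "?ext tr a s' ! t = tr ! t" if "valid_traj (Suc k) tr" for tr a s'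
      using that True unfolding valid_traj_def by (simp add: nth_append)
    have "(\<Sum>tr\<in>{tr. valid_traj (Suc k) tr}. \<Sum>a\<in>UNIV. \<Sum>s'\<in>UNIV.
          if ?ext tr a s' ! t = (s0, a0, s1)
          then traj_prob D P pi0 tr * (pi0 (snd (snd (last tr))) a * P (snd (snd (last tr))) a s') else 0)
        = (\<Sum>tr\<in>{tr. valid_traj (Suc k) tr}. if tr ! t = (s0, a0, s1) then traj_prob D P pi0 tr else 0)"
      by (intro sum.cong refl) (simp add: nth_ext sum_distrib_left[symmetric] sum_P sum_pi0)
    then show ?thesis
      using Suc.IH[OF True] by simp
  next
    case False
    with Suc.prems have t: "t = Suc k" by simp
    define hh where "hh s = (if s = s0 then pi0 s0 a0 * P s0 a0 s1 else 0)" for s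
    have nth_ext: "?ext tr a s' ! t = (snd (snd (last tr)), a, s')" if "valid_traj (Suc k) tr" for tr a s'
      using that t unfolding valid_traj_def by (simp add: nth_append)
    have "(\<Sum>tr\<in>{tr. valid_traj (Suc k) tr}. \<Sum>a\<in>UNIV. \<Sum>s'\<in>UNIV.
          if ?ext tr a s' ! t = (s0, a0, s1)
          then traj_prob D P pi0 tr * (pi0 (snd (snd (last tr))) a * P (snd (snd (last tr))) a s') else 0)
        = (\<Sum>tr\<in>{tr. valid_traj (Suc k) tr}. traj_prob D P pi0 tr * hh (snd (snd (last tr))))"
      by (intro sum.cong refl) (simp only: mem_Collect_eq nth_ext sum_if_triple_eq, simp add: hh_def)
    also have "\<dots> = (\<Sum>s\<in>UNIV. mu_t P pi0 D (Suc k) s * hh s)"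
      by (rule sum_traj_prob_last_state)
    finally show ?thesis
      unfolding hh_def t by (simp add: if_distrib mult.assoc cong: if_cong)
  qed
  finally show ?case .
qed

lemma length_filter_eq_sum:
  "length (filter (\<lambda>y. y = c) xs) = (\<Sum>t<length xs. if xs ! t = c then 1 else 0::nat)"
  by (induction xs) (simp_all del: sum.lessThan_Suc add: sum.lessThan_Suc_shift)

text \<open>Summing the law of step \<open>t\<close> over \<open>t < T\<close> reproduces \<open>T\<close> times the average occupancy.\<close>

lemma expected_count:
  assumes "T \<ge> 1"
  shows "(\<Sum>tr\<in>{tr. valid_traj T tr}. traj_prob D P pi0 tr * real (length (filter (\<lambda>y. y = (s0, a0, s1)) tr)))
     = real T * Lam T P D pi0 s0 a0 * P s0 a0 s1"
proof -
  obtain k where k: "T = Suc k"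
    using assms by (cases T) auto
  have "(\<Sum>tr\<in>{tr. valid_traj T tr}. traj_prob D P pi0 tr * real (length (filter (\<lambda>y. y = (s0, a0, s1)) tr)))
      = (\<Sum>tr\<in>{tr. valid_traj T tr}. \<Sum>t<T. if tr ! t = (s0, a0, s1) then traj_prob D P pi0 tr else 0)"
    by (intro sum.cong refl)
      (auto simp: valid_traj_def length_filter_eq_sum of_nat_sum sum_distrib_left intro!: sum.cong)
  also have "\<dots> = (\<Sum>t<T. \<Sum>tr\<in>{tr. valid_traj T tr}. if tr ! t = (s0, a0, s1) then traj_prob D P pi0 tr else 0)"
    by (rule sum.swap)
  also have "\<dots> = (\<Sum>t<T. mu_t P pi0 D t s0 * pi0 s0 a0 * P s0 a0 s1)"
    unfolding k by (intro sum.cong refl sum_traj_prob_nth_eq) simp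
  also have "\<dots> = real T * Lam T P D pi0 s0 a0 * P s0 a0 s1"
    using assms unfolding Lam_def mu_bar_def by (simp add: sum_distrib_right)
  finally show ?thesis .
qed

end

section \<open>The law of a dataset\<close>

lemma sum_prod_list_lists_length:
  fixes g :: "'x \<Rightarrow> real"
  shows "(\<Sum>ds\<in>{ds. length ds = N \<and> (\<forall>x\<in>set ds. Q x)}. prod_list (map g ds)) = (\<Sum>x\<in>{x. Q x}. g x) ^ N"
proof (induction N)
  case 0
  have "{ds. length ds = 0 \<and> (\<forall>x\<in>set ds. Q x)} = {[]}" by auto
  then show ?case by simp
next
  case (Suc N)
  let ?L = "\<lambda>N. {ds. length ds = N \<and> (\<forall>x\<in>set ds. Q x)}"
  have "?L (Suc N) = (\<lambda>(x, xs). x # xs) ` ({x. Q x} \<times> ?L N)"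
    by (auto simp: length_Suc_conv image_iff)
  moreover have "inj_on (\<lambda>(x, xs). x # xs) ({x. Q x} \<times> ?L N)"
    by (auto simp: inj_on_def)
  ultimately have "(\<Sum>ds\<in>?L (Suc N). prod_list (map g ds)) = (\<Sum>x\<in>{x. Q x}. \<Sum>ds\<in>?L N. g x * prod_list (map g ds))"
    by (simp add: sum.reindex sum.cartesian_product' split_def)
  also have "\<dots> = (\<Sum>x\<in>{x. Q x}. g x) ^ Suc N"
    using Suc by (simp add: sum_product[symmetric])
  finally show ?case .
qed

lemma finite_datasets: "finite (datasets T N :: ('st::finite \<times> 'a::finite \<times> 'st) list list set)"
proof -
  have "datasets T N = {ds :: ('st \<times> 'a \<times> 'st) list list. set ds \<subseteq> {tr. valid_traj T tr} \<and> length ds = N}"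
    unfolding datasets_def by auto
  then show ?thesis
    by (simp only: finite_lists_length_eq[OF finite_valid_traj])
qed

lemma data_prob_eq_sum_if:
  "data_prob T N D P pi0 E = (\<Sum>ds\<in>datasets T N. if E ds then prod_list (map (traj_prob D P pi0) ds) else 0)"
  for D :: "'st::finite \<Rightarrow> real" and P :: "'st \<Rightarrow> 'a::finite \<Rightarrow> 'st \<Rightarrow> real"
  unfolding data_prob_def by (rule sum.inter_filter[OF finite_datasets])

context episode_model
begin

lemma prod_list_traj_prob_nonneg: "prod_list (map (traj_prob D P pi0) ds) \<ge> 0"
  by (induction ds) (simp_all add: traj_prob_nonneg[OF D P pi0])

lemma data_prob_True: "T \<ge> 1 \<Longrightarrow> data_prob T N D P pi0 (\<lambda>_. True) = 1"
  unfolding data_prob_def datasets_def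
  by (simp add: sum_prod_list_lists_length sum_traj_prob)

lemma data_prob_mono:
  "(\<And>ds. ds \<in> datasets T N \<Longrightarrow> E ds \<Longrightarrow> F ds) \<Longrightarrow> data_prob T N D P pi0 E \<le> data_prob T N D P pi0 F"
  unfolding data_prob_eq_sum_if by (intro sum_mono) (auto simp: prod_list_traj_prob_nonneg)

lemma data_prob_Not:
  assumes "T \<ge> 1"
  shows "data_prob T N D P pi0 (\<lambda>ds. \<not> E ds) = 1 - data_prob T N D P pi0 E"
proof -
  have "data_prob T N D P pi0 E + data_prob T N D P pi0 (\<lambda>ds. \<not> E ds) = data_prob T N D P pi0 (\<lambda>_. True)"
    unfolding data_prob_eq_sum_if sum.distrib[symmetric] by (intro sum.cong) auto
  then show ?thesis
    using data_prob_True[OF assms] by simp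
qed

lemma data_prob_Bex_le:
  assumes "finite I"
  shows "data_prob T N D P pi0 (\<lambda>ds. \<exists>i\<in>I. B i ds) \<le> (\<Sum>i\<in>I. data_prob T N D P pi0 (B i))"
proof -
  have "data_prob T N D P pi0 (\<lambda>ds. \<exists>i\<in>I. B i ds)
      \<le> (\<Sum>ds\<in>datasets T N. \<Sum>i\<in>I. if B i ds then prod_list (map (traj_prob D P pi0) ds) else 0)"
    unfolding data_prob_eq_sum_if
  proof (rule sum_mono)
    fix ds
    show "(if \<exists>i\<in>I. B i ds then prod_list (map (traj_prob D P pi0) ds) else 0)
        \<le> (\<Sum>i\<in>I. if B i ds then prod_list (map (traj_prob D P pi0) ds) else 0)"
    proof (cases "\<exists>i\<in>I. B i ds")
      case True
      then obtain i where i: "i \<in> I" "B i ds" by blast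
      then show ?thesis
        using member_le_sum[OF i(1) _ assms, of "\<lambda>i. if B i ds then prod_list (map (traj_prob D P pi0) ds) else 0"]
        by (simp add: prod_list_traj_prob_nonneg)
    qed (simp add: sum_nonneg prod_list_traj_prob_nonneg)
  qed
  also have "\<dots> = (\<Sum>i\<in>I. data_prob T N D P pi0 (B i))"
    unfolding data_prob_eq_sum_if by (rule sum.swap)
  finally show ?thesis .
qed

text \<open>Chernoff bound: the indicator of \<open>c \<le> \<Sum> Y\<close> is dominated by \<open>exp (l (\<Sum> Y - c))\<close>, and
  the exponential of a sum over independent episodes factorises.\<close>

lemma data_prob_sum_list_ge_le:
  assumes l: "l \<ge> 0"
  shows "data_prob T N D P pi0 (\<lambda>ds. c \<le> sum_list (map Y ds))
     \<le> exp (- l * c) * (\<Sum>tr\<in>{tr. valid_traj T tr}. traj_prob D P pi0 tr * exp (l * Y tr)) ^ N"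
proof -
  have "data_prob T N D P pi0 (\<lambda>ds. c \<le> sum_list (map Y ds))
      \<le> (\<Sum>ds\<in>datasets T N. exp (- l * c) * prod_list (map (\<lambda>tr. traj_prob D P pi0 tr * exp (l * Y tr)) ds))"
    unfolding data_prob_eq_sum_if
  proof (rule sum_mono)
    fix ds :: "('st \<times> 'a \<times> 'st) list list"
    have exp_sum: "exp (l * sum_list (map Y ds)) * prod_list (map (traj_prob D P pi0) ds)
        = prod_list (map (\<lambda>tr. traj_prob D P pi0 tr * exp (l * Y tr)) ds)"
      by (induction ds) (simp_all add: distrib_left exp_add mult_ac)
    have indicator_le: "(if c \<le> sum_list (map Y ds) then 1 else 0) \<le> exp (l * (sum_list (map Y ds) - c))"
      using l by auto
    have "(if c \<le> sum_list (map Y ds) then prod_list (map (traj_prob D P pi0) ds) else 0)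
        \<le> exp (l * (sum_list (map Y ds) - c)) * prod_list (map (traj_prob D P pi0) ds)"
      using mult_right_mono[OF indicator_le prod_list_traj_prob_nonneg[of ds]]
      by (cases "c \<le> sum_list (map Y ds)") simp_all
    also have "\<dots> = exp (- l * c) * (exp (l * sum_list (map Y ds)) * prod_list (map (traj_prob D P pi0) ds))"
      by (simp add: right_diff_distrib exp_diff exp_minus divide_inverse)
    also have "\<dots> = exp (- l * c) * prod_list (map (\<lambda>tr. traj_prob D P pi0 tr * exp (l * Y tr)) ds)"
      unfolding exp_sum ..
    finally show "(if c \<le> sum_list (map Y ds) then prod_list (map (traj_prob D P pi0) ds) else 0)
        \<le> exp (- l * c) * prod_list (map (\<lambda>tr. traj_prob D P pi0 tr * exp (l * Y tr)) ds)" .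
  qed
  also have "\<dots> = exp (- l * c) * (\<Sum>tr\<in>{tr. valid_traj T tr}. traj_prob D P pi0 tr * exp (l * Y tr)) ^ N"
    unfolding datasets_def
    by (simp add: sum_distrib_left[symmetric] sum_prod_list_lists_length)
  finally show ?thesis .
qed

end

section \<open>Hoeffding's inequality for the episode counts\<close>

lemma sum_exp_le_two_point:
  fixes w f :: "'x \<Rightarrow> real"
  assumes w0: "\<forall>x\<in>A. w x \<ge> 0" and w1: "(\<Sum>x\<in>A. w x) = 1"
    and fab: "\<forall>x\<in>A. a \<le> f x \<and> f x \<le> b" and ab: "a < b"
    and mean: "(\<Sum>x\<in>A. w x * f x) = 0" and l: "l \<ge> 0"
  shows "(\<Sum>x\<in>A. w x * exp (l * f x)) \<le> (b * exp (l * a) - a * exp (l * b)) / (b - a)"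
proof -
  have chord: "exp (l * f x) \<le> (b - f x) / (b - a) * exp (l * a) + (f x - a) / (b - a) * exp (l * b)"
    if x: "x \<in> A" for x
  proof -
    define y where "y = (b - f x) / (b - a)"
    have y: "y \<in> {0..1}"
      using fab x ab by (auto simp: y_def)
    have convex: "exp (l * ((1 - y) *\<^sub>R b + y *\<^sub>R a)) \<le> (1 - y) * exp (l * b) + y * exp (l * a)"
      using y l by (intro convex_onD[OF convex_on_exp]) auto
    have "y * (b - a) = b - f x" and one_minus_y: "1 - y = (f x - a) / (b - a)"
      using ab by (simp_all add: y_def field_simps)
    then have "(1 - y) *\<^sub>R b + y *\<^sub>R a = f x"
      by (simp add: algebra_simps)
    with convex show ?thesis
      unfolding one_minus_y by (simp add: y_def)
  qed
  have "(\<Sum>x\<in>A. w x * exp (l * f x))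
      \<le> (\<Sum>x\<in>A. w x * ((b - f x) / (b - a) * exp (l * a) + (f x - a) / (b - a) * exp (l * b)))"
    using chord w0 by (intro sum_mono mult_left_mono) auto
  also have "\<dots> = (\<Sum>x\<in>A. (b * w x - w x * f x) / (b - a) * exp (l * a)
                        + (w x * f x - a * w x) / (b - a) * exp (l * b))"
    using ab by (intro sum.cong refl) (simp add: field_simps)
  also have "\<dots> = (\<Sum>x\<in>A. b * w x - w x * f x) / (b - a) * exp (l * a)
                   + (\<Sum>x\<in>A. w x * f x - a * w x) / (b - a) * exp (l * b)"
    by (simp add: sum.distrib sum_distrib_right[symmetric] sum_divide_distrib[symmetric])
  also have "(\<Sum>x\<in>A. b * w x - w x * f x) = b"
    using w1 mean by (simp add: sum_subtractf sum_distrib_left[symmetric])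
  also have "(\<Sum>x\<in>A. w x * f x - a * w x) = - a"
    using w1 mean by (simp add: sum_subtractf sum_distrib_left[symmetric])
  finally show ?thesis
    by (simp add: diff_divide_distrib)
qed

lemma two_point_exp_le:
  fixes a b l :: real
  assumes a: "a \<le> 0" and ab: "a < b" and l: "l > 0"
  shows "(b * exp (l * a) - a * exp (l * b)) / (b - a) \<le> exp (l\<^sup>2 * (b - a)\<^sup>2 / 8)"
proof -
  define p where "p = - a / (b - a)"
  define z where "z = l * (b - a)"
  have z: "z > 0"
    using ab l by (simp add: z_def)
  have p: "p \<ge> 0"
    unfolding p_def using a ab by (intro divide_nonneg_pos) auto
  have pos: "1 + p * (exp z - 1) > 0"
    using z p by (simp add: add_pos_nonneg)
  have "(b * exp (l * a) - a * exp (l * b)) / (b - a) = exp (- z * p) * (1 + p * (exp z - 1))"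
    using ab by (simp add: p_def z_def field_simps exp_diff[symmetric] exp_add[symmetric])
  also have "\<dots> = exp (- z * p + ln (1 + p * (exp z - 1)))"
    using pos by (simp add: exp_add exp_diff exp_minus field_simps)
  also have "\<dots> \<le> exp (z\<^sup>2 / 8)"
    using Hoeffdings_lemma_aux[OF less_imp_le[OF z] p] by simp
  also have "\<dots> = exp (l\<^sup>2 * (b - a)\<^sup>2 / 8)"
    by (simp add: z_def power_mult_distrib)
  finally show ?thesis .
qed

lemma Hoeffdings_lemma_finite:
  fixes w f :: "'x \<Rightarrow> real"
  assumes "\<forall>x\<in>A. w x \<ge> 0" "(\<Sum>x\<in>A. w x) = 1" "\<forall>x\<in>A. a \<le> f x \<and> f x \<le> b"
    and "a \<le> 0" "a < b" "(\<Sum>x\<in>A. w x * f x) = 0" "l > 0"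
  shows "(\<Sum>x\<in>A. w x * exp (l * f x)) \<le> exp (l\<^sup>2 * (b - a)\<^sup>2 / 8)"
  using sum_exp_le_two_point[of A w a f b l] two_point_exp_le[of a b l] assms by force

context episode_model
begin

lemma data_prob_sum_list_ge_le_Hoeffding:
  assumes T: "T \<ge> 1" and u: "u > 0"
    and Y: "\<forall>tr\<in>{tr. valid_traj T tr}. a \<le> Y tr \<and> Y tr \<le> b" and a: "a \<le> 0"
    and ba: "b - a = real T"
    and mean: "(\<Sum>tr\<in>{tr. valid_traj T tr}. traj_prob D P pi0 tr * Y tr) = 0"
  shows "data_prob T N D P pi0 (\<lambda>ds. real N * u \<le> sum_list (map Y ds)) \<le> exp (- 2 * real N * u\<^sup>2 / (real T)\<^sup>2)"
proof -
  define l where "l = 4 * u / (real T)\<^sup>2"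
  have l: "l > 0"
    unfolding l_def using u T by simp
  have mgf: "(\<Sum>tr\<in>{tr. valid_traj T tr}. traj_prob D P pi0 tr * exp (l * Y tr)) \<le> exp (l\<^sup>2 * (b - a)\<^sup>2 / 8)"
    using T ba traj_prob_nonneg[OF D P pi0]
    by (intro Hoeffdings_lemma_finite[OF _ sum_traj_prob[OF T] Y a _ mean l]) auto
  have "data_prob T N D P pi0 (\<lambda>ds. real N * u \<le> sum_list (map Y ds))
      \<le> exp (- l * (real N * u)) * (\<Sum>tr\<in>{tr. valid_traj T tr}. traj_prob D P pi0 tr * exp (l * Y tr)) ^ N"
    using l by (intro data_prob_sum_list_ge_le) simp
  also have "\<dots> \<le> exp (- l * (real N * u)) * exp (l\<^sup>2 * (b - a)\<^sup>2 / 8) ^ N"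
    using mgf traj_prob_nonneg[OF D P pi0] by (intro mult_left_mono power_mono sum_nonneg) auto
  also have "\<dots> = exp (- l * (real N * u) + real N * (l\<^sup>2 * (b - a)\<^sup>2 / 8))"
    by (simp add: exp_of_nat_mult[symmetric] exp_add[symmetric])
  also have "- l * (real N * u) + real N * (l\<^sup>2 * (b - a)\<^sup>2 / 8) = - 2 * real N * u\<^sup>2 / (real T)\<^sup>2"
    unfolding ba l_def using T by (simp add: field_simps power2_eq_square)
  finally show ?thesis .
qed

lemma data_prob_disj_le:
  "data_prob T N D P pi0 (\<lambda>ds. E ds \<or> F ds) \<le> data_prob T N D P pi0 E + data_prob T N D P pi0 F"
  unfolding data_prob_eq_sum_if sum.distrib[symmetric] by (intro sum_mono) (auto simp: prod_list_traj_prob_nonneg)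

lemma real_count_sas_eq_sum_list:
  "real (count_sas ds s a s') = sum_list (map (\<lambda>tr. real (length (filter (\<lambda>y. y = (s, a, s')) tr))) ds)"
  unfolding count_sas_def by (induction ds) simp_all

lemma data_prob_count_deviation_le:
  assumes T: "T \<ge> 1" and u: "u > 0"
  shows "data_prob T N D P pi0
      (\<lambda>ds. \<not> \<bar>real (count_sas ds s a s') - real N * (real T * Lam T P D pi0 s a * P s a s')\<bar> < real N * u)
    \<le> 2 * exp (- 2 * real N * u\<^sup>2 / (real T)\<^sup>2)"
proof -
  define X where "X tr = real (length (filter (\<lambda>y. y = (s, a, s')) tr))" for tr :: "('st \<times> 'a \<times> 'st) list"
  define m where "m = real T * Lam T P D pi0 s a * P s a s'"
  have X: "\<forall>tr\<in>{tr. valid_traj T tr}. 0 \<le> X tr \<and> X tr \<le> real T"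
    unfolding X_def valid_traj_def by (auto intro: length_filter_le[THEN order.trans])
  have EX: "(\<Sum>tr\<in>{tr. valid_traj T tr}. traj_prob D P pi0 tr * X tr) = m"
    unfolding X_def m_def by (rule expected_count[OF T])
  have m: "m \<ge> 0" "m \<le> real T"
    unfolding EX[symmetric] using X traj_prob_nonneg[OF D P pi0] sum_traj_prob[OF T]
    by (auto intro!: sum_nonneg sum_weighted_le finite_valid_traj)
  have "(\<Sum>tr\<in>{tr. valid_traj T tr}. traj_prob D P pi0 tr * (X tr - m)) = 0"
    and "(\<Sum>tr\<in>{tr. valid_traj T tr}. traj_prob D P pi0 tr * (m - X tr)) = 0"
    using EX sum_traj_prob[OF T] by (simp_all add: right_diff_distrib sum_subtractf sum_distrib_right[symmetric])
  note Hoeffding = data_prob_sum_list_ge_le_Hoeffding[OF T u _ _ _ this(1)]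
    data_prob_sum_list_ge_le_Hoeffding[OF T u _ _ _ this(2)]
  have upper: "data_prob T N D P pi0 (\<lambda>ds. real N * u \<le> sum_list (map (\<lambda>tr. X tr - m) ds))
      \<le> exp (- 2 * real N * u\<^sup>2 / (real T)\<^sup>2)"
    by (rule Hoeffding(1)[where a = "- m" and b = "real T - m"]) (use X m in auto)
  have lower: "data_prob T N D P pi0 (\<lambda>ds. real N * u \<le> sum_list (map (\<lambda>tr. m - X tr) ds))
      \<le> exp (- 2 * real N * u\<^sup>2 / (real T)\<^sup>2)"
    by (rule Hoeffding(2)[where a = "m - real T" and b = m]) (use X m in auto)
  have "sum_list (map (\<lambda>tr. X tr - m) ds) = sum_list (map X ds) - real (length ds) * m"
    and "sum_list (map (\<lambda>tr. m - X tr) ds) = real (length ds) * m - sum_list (map X ds)" for ds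
    by (induction ds) (simp_all add: algebra_simps)
  then have "data_prob T N D P pi0
      (\<lambda>ds. \<not> \<bar>real (count_sas ds s a s') - real N * m\<bar> < real N * u)
    \<le> data_prob T N D P pi0 (\<lambda>ds. real N * u \<le> sum_list (map (\<lambda>tr. X tr - m) ds)
                                  \<or> real N * u \<le> sum_list (map (\<lambda>tr. m - X tr) ds))"
    unfolding real_count_sas_eq_sum_list X_def[symmetric]
    by (intro data_prob_mono) (auto simp: datasets_def)
  also have "\<dots> \<le> data_prob T N D P pi0 (\<lambda>ds. real N * u \<le> sum_list (map (\<lambda>tr. X tr - m) ds))
                   + data_prob T N D P pi0 (\<lambda>ds. real N * u \<le> sum_list (map (\<lambda>tr. m - X tr) ds))"
    by (rule data_prob_disj_le)
  also have "\<dots> \<le> 2 * exp (- 2 * real N * u\<^sup>2 / (real T)\<^sup>2)"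
    using upper lower by simp
  finally show ?thesis
    unfolding m_def .
qed

lemma data_prob_not_counts_close_le:
  assumes T: "T \<ge> 1" and u: "u > 0"
  shows "data_prob T N D P pi0 (\<lambda>ds. \<not> counts_close T N D P pi0 u ds)
    \<le> 2 * real (card (UNIV :: 'st set)) ^ 2 * real (card (UNIV :: 'a set)) * exp (- 2 * real N * u\<^sup>2 / (real T)\<^sup>2)"
proof -
  define B where "B x ds \<longleftrightarrow> \<not> \<bar>real (count_sas ds (fst x) (fst (snd x)) (snd (snd x)))
      - real N * (real T * Lam T P D pi0 (fst x) (fst (snd x)) * P (fst x) (fst (snd x)) (snd (snd x)))\<bar>
      < real N * u" for x :: "'st \<times> 'a \<times> 'st" and ds
  have "(\<lambda>ds. \<not> counts_close T N D P pi0 u ds) = (\<lambda>ds. \<exists>x\<in>UNIV. B x ds)"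
    unfolding counts_close_def B_def by auto
  then have "data_prob T N D P pi0 (\<lambda>ds. \<not> counts_close T N D P pi0 u ds) \<le> (\<Sum>x\<in>UNIV. data_prob T N D P pi0 (B x))"
    by (simp only: data_prob_Bex_le finite)
  also have "\<dots> \<le> (\<Sum>x\<in>(UNIV :: ('st \<times> 'a \<times> 'st) set). 2 * exp (- 2 * real N * u\<^sup>2 / (real T)\<^sup>2))"
    unfolding B_def by (intro sum_mono data_prob_count_deviation_le[OF T u])
  also have "\<dots> = 2 * real (card (UNIV :: 'st set)) ^ 2 * real (card (UNIV :: 'a set)) * exp (- 2 * real N * u\<^sup>2 / (real T)\<^sup>2)"
    by (simp add: card_cartesian_product power2_eq_square flip: UNIV_Times_UNIV)
  finally show ?thesis .
qed

end

section \<open>Sample complexity\<close>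

lemma counts_close_imp_plug_in_guarantee:
  fixes P Q :: "grp \<times> 's::finite \<Rightarrow> 'a::finite \<Rightarrow> grp \<times> 's \<Rightarrow> real"
  assumes T: "T \<ge> 1" and D: "is_distr D" and P: "is_kernel P" and Q: "is_kernel Q"
    and pmaj: "p_grp D Maj > 0" and pmin: "p_grp D Min > 0"
    and Rmax: "Rmax > 0" and Rbd: "\<forall>s a. \<bar>R s a\<bar> \<le> Rmax" and \<rho>bd: "\<forall>s a. \<bar>\<rho> s a\<bar> \<le> Rmax"
    and lam0: "lam0 > 0" "\<forall>s a. Lam T P D pi0 s a \<ge> lam0"
    and eps: "0 < \<epsilon>" "\<epsilon> \<le> 4 * Rmax"
    and pistar_in: "pistar \<in> PiDP T P D \<rho> (\<epsilon> / 4)"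
    and close: "counts_close T N D P pi0 (lam0 * \<epsilon> / (16 * real (card (UNIV :: (grp \<times> 's) set)) * Rmax)) ds"
  shows "plug_in_guarantee T P (P_hat Q ds) D R \<rho> \<epsilon> pistar"
proof (rule plug_in_guarantee_if_l1_close[OF T D P is_kernel_P_hat[OF Q] pmaj pmin Rmax Rbd \<rho>bd _ eps(1) pistar_in])
  define K where "K = real (card (UNIV :: (grp \<times> 's) set))"
  have K: "K > 0"
    unfolding K_def by simp
  have "K * (lam0 * \<epsilon> / (16 * K * Rmax)) \<le> lam0 / 4"
    using K Rmax lam0 eps by (simp add: field_simps)
  moreover have "8 * K * (lam0 * \<epsilon> / (16 * K * Rmax)) / (3 * real T * lam0) = \<epsilon> / (6 * real T * Rmax)"
    using K Rmax lam0 by (simp add: field_simps)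
  ultimately show "\<forall>s a. (\<Sum>s'\<in>UNIV. \<bar>P s a s' - P_hat Q ds s a s'\<bar>) \<le> \<epsilon> / (6 * real T * Rmax)"
    using P_hat_l1_dist_le[OF T P close[folded K_def] lam0(1)] lam0(2) unfolding K_def by auto
qed

lemma sample_size_suffices:
  fixes S A T Rmax lam0 \<epsilon> \<delta> N :: real
  assumes pos: "S > 0" "A > 0" "T > 0" "Rmax > 0" "lam0 > 0" "\<epsilon> > 0" "\<delta> > 0"
    and N: "N \<ge> 128 * T ^ 2 * S ^ 2 * Rmax ^ 2 * ln (2 * S ^ 2 * A / \<delta>) / (lam0 ^ 2 * \<epsilon> ^ 2)"
  shows "2 * S ^ 2 * A * exp (- 2 * N * (lam0 * \<epsilon> / (16 * S * Rmax))\<^sup>2 / T\<^sup>2) \<le> \<delta>"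
proof -
  have "ln (2 * S ^ 2 * A / \<delta>) \<le> 2 * N * (lam0 * \<epsilon> / (16 * S * Rmax))\<^sup>2 / T\<^sup>2"
    using N pos by (simp add: field_simps power2_eq_square)
  then have "exp (ln (2 * S ^ 2 * A / \<delta>)) \<le> exp (2 * N * (lam0 * \<epsilon> / (16 * S * Rmax))\<^sup>2 / T\<^sup>2)"
    by simp
  then have "2 * S ^ 2 * A / \<delta> \<le> exp (2 * N * (lam0 * \<epsilon> / (16 * S * Rmax))\<^sup>2 / T\<^sup>2)"
    using pos by simp
  then show ?thesis
    using pos by (simp add: exp_minus field_simps)
qed

lemma (in episode_model) data_prob_counts_close_ge:
  assumes T: "T \<ge> 1" and pos: "Rmax > 0" "lam0 > 0" "\<epsilon> > 0" "\<delta> > 0"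
    and N: "real N \<ge> 128 * real T ^ 2 * real (card (UNIV :: 'st set)) ^ 2 * Rmax ^ 2
                 * ln (2 * real (card (UNIV :: 'st set)) ^ 2 * real (card (UNIV :: 'a set)) / \<delta>)
               / (lam0 ^ 2 * \<epsilon> ^ 2)"
  shows "data_prob T N D P pi0 (counts_close T N D P pi0 (lam0 * \<epsilon> / (16 * real (card (UNIV :: 'st set)) * Rmax)))
    \<ge> 1 - \<delta>"
proof -
  define u where "u = lam0 * \<epsilon> / (16 * real (card (UNIV :: 'st set)) * Rmax)"
  have u: "u > 0"
    unfolding u_def using pos by simp
  have "data_prob T N D P pi0 (\<lambda>ds. \<not> counts_close T N D P pi0 u ds) \<le> \<delta>"
    using data_prob_not_counts_close_le[OF T u, of N] sample_size_suffices[OF _ _ _ pos N] T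
    unfolding u_def by simp
  then show ?thesis
    unfolding u_def[symmetric] using data_prob_Not[OF T] by simp
qed

theorem theorem8:
  fixes T N0 :: nat
    and D :: "grp \<times> 's::finite \<Rightarrow> real"
    and P Q :: "grp \<times> 's \<Rightarrow> 'a::finite \<Rightarrow> grp \<times> 's \<Rightarrow> real"
    and R \<rho> pi0 pistar :: "grp \<times> 's \<Rightarrow> 'a \<Rightarrow> real"
    and Rmax lam0 \<epsilon> \<delta> :: real
  assumes T: "T \<ge> 1"
    and D: "is_distr D"
    and P: "is_kernel P"
    and Q: "is_kernel Q"
    and pmaj: "p_grp D Maj > 0" and pmin: "p_grp D Min > 0"
    and Rmax: "Rmax > 0"
    and Rbd: "\<forall>s a. \<bar>R s a\<bar> \<le> Rmax" and rhobd: "\<forall>s a. \<bar>\<rho> s a\<bar> \<le> Rmax"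
    and pi0_pol: "is_policy pi0"
    and lam0_pos: "lam0 > 0" and Lam0: "\<forall>s a. Lam T P D pi0 s a \<ge> lam0"
    and eps: "\<epsilon> > 0" and delta: "\<delta> > 0"
    and N0: "real N0 \<ge> 128 * real T ^ 2 * real (card (UNIV :: (grp \<times> 's) set)) ^ 2 * Rmax ^ 2
                 * ln (2 * real (card (UNIV :: (grp \<times> 's) set)) ^ 2 * real (card (UNIV :: 'a set)) / \<delta>)
               / (lam0 ^ 2 * \<epsilon> ^ 2)"
    and nonempty: "PiDP T P D \<rho> (\<epsilon> / 4) \<noteq> {}"
    and pistar_in: "pistar \<in> PiDP T P D \<rho> (\<epsilon> / 4)"
    and pistar_max: "\<forall>\<pi>\<in>PiDP T P D \<rho> (\<epsilon> / 4). Rval T P D R \<pi> \<le> Rval T P D R pistar"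
  shows "data_prob T N0 D P pi0
           (\<lambda>ds. PiDP T (P_hat Q ds) D \<rho> (\<epsilon> / 2) \<noteq> {} \<and>
                 (\<forall>pihat. (pihat \<in> PiDP T (P_hat Q ds) D \<rho> (\<epsilon> / 2) \<and>
                          (\<forall>\<pi>\<in>PiDP T (P_hat Q ds) D \<rho> (\<epsilon> / 2).
                              Rval T (P_hat Q ds) D R \<pi> \<le> Rval T (P_hat Q ds) D R pihat))
                        \<longrightarrow> pihat \<in> PiDP T P D \<rho> \<epsilon> \<and>
                            Rval T P D R pistar - Rval T P D R pihat \<le> \<epsilon>))
         \<ge> 1 - \<delta>"
proof -
  interpret episode_model D P pi0
    using D P pi0_pol by unfold_locales
  let ?good = "\<lambda>ds. plug_in_guarantee T P (P_hat Q ds) D R \<rho> \<epsilon> pistar"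
  have "data_prob T N0 D P pi0 ?good \<ge> 1 - \<delta>"
  proof (cases "4 * Rmax \<le> \<epsilon>")
    case True
    then have "data_prob T N0 D P pi0 (\<lambda>_. True) \<le> data_prob T N0 D P pi0 ?good"
      using plug_in_guarantee_if_rewards_small[OF T D P is_kernel_P_hat[OF Q] pmaj pmin Rbd rhobd _ pistar_in]
      by (intro data_prob_mono) auto
    then show ?thesis
      using data_prob_True[OF T] delta by simp
  next
    case False
    let ?close = "counts_close T N0 D P pi0 (lam0 * \<epsilon> / (16 * real (card (UNIV :: (grp \<times> 's) set)) * Rmax))"
    have "data_prob T N0 D P pi0 ?close \<le> data_prob T N0 D P pi0 ?good"
      using counts_close_imp_plug_in_guarantee[OF T D P Q pmaj pmin Rmax Rbd rhobd lam0_pos Lam0 eps _ pistar_in] False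
      by (intro data_prob_mono) auto
    then show ?thesis
      using data_prob_counts_close_ge[OF T Rmax lam0_pos eps delta N0] by linarith
  qed
  then show ?thesis
    unfolding plug_in_guarantee_def .
qed

end
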